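(* Let $\mu$ be a positive Radon measure on $\mathbb{R}^d$ satisfying the growth condition with constants $C_0>0$, $n\in(0,d]$, and let $1 \le q \le p<\infty$. There is a constant $C>0$ such that for every $f \in \mathcal{C}^p_q(\mu)$ satisfying $M(f)=\lim_{Q \in \mathcal{Q}(\mu,2)}m_Q(f)=0$, \[ C^{-1}\,\| f \, : \, \mathcal{C}^p_q(\mu)\| \le \| f \, : \, \mathcal{M}^p_q(\mu) \| \le C\,\| f \, : \, \mathcal{C}^p_q(\mu)\|. \]
   Context: Growth condition: $\mu(Q(x,l)) \le C_0\,l^n$ for all $x \in \operatorname{supp}(\mu)$ and $l>0$. Cubes are closed with sides parallel to the axes; $Q(x,l)$ is the cube centered at $x$ of side length $l$; $z_Q$, $\ell(Q)$ are center and side length; $\rho Q$ is concentric with $Q$ of side length $\rho\ell(Q)$. $\mathcal{Q}(\mu)$ is the set of cubes of positive $\mu$-measure (including $\mathbb{R}^d$ if $\mu$ is finite). $Q\in\mathcal{Q}(\mu)$ is doubling if $\mu(2Q)\le 2^{d+1}\mu(Q)$; $\mathcal{Q}(\mu,2)$ is the set of doubling cubes, directed by inclusion. For $Q\in\mathcal{Q}(\mu)$, $Q^*$ is the smallest doubling cube of the form $2^jQ$, $j\ge 0$. For $Q\subset R$, $Q\in\mathcal{Q}(\mu)$, let $Q_R$ be the smallest cube concentric with $Q$ containing $R$, $\delta(Q,R):=\int_{\ell(Q)}^{\ell(Q_R)} \mu(Q(z_Q,l))\,l^{-n}\,\frac{dl}{l}$ and $K_{Q,R}:=1+\delta(Q,R)$.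 $m_Q(f):=\mu(Q)^{-1}\int_Q f\,d\mu$. The statement $\lim_{Q \in \mathcal{Q}(\mu,2)}m_Q(f)=0$ means: for every $\varepsilon>0$ there is $Q\in\mathcal{Q}(\mu,2)$ with $|m_R(f)|\le\varepsilon$ for all $R\in\mathcal{Q}(\mu,2)$ with $R\supset Q$. Norms: \[ \|f : \mathcal{C}^p_q(\mu)\| := \sup_{Q \in \mathcal{Q}(\mu)} \mu(2Q)^{\frac{1}{p}-\frac{1}{q}} \Big(\int_Q|f(x)-m_{Q^*}(f)|^q\,d\mu(x)\Big)^{\frac{1}{q}} + \sup_{Q \subset R,\ Q,R \in \mathcal{Q}(\mu,2)} \mu(Q)^{\frac{1}{p}} \frac{|m_Q(f)-m_R(f)|}{K_{Q,R}}, \] $\mathcal{C}^p_q(\mu)$ being the set of $f\in L^1_{loc}(\mu)$ where this is finite, and \[ \| f : \mathcal{M}^p_q(\mu)\| := \sup_{Q \in \mathcal{Q}(\mu)} \mu(2Q)^{\frac{1}{p}-\frac{1}{q}} \Big(\int_Q|f|^q\,d\mu\Big)^{\frac{1}{q}}. \] *)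

theory Defs
  imports "HOL-Analysis.Analysis"
begin

definition cube :: "'a::euclidean_space \<Rightarrow> real \<Rightarrow> 'a set" where
  "cube z l = cbox (z - (l/2) *\<^sub>R One) (z + (l/2) *\<^sub>R One)"

definition is_cube :: "'a::euclidean_space set \<Rightarrow> bool" where
  "is_cube Q \<longleftrightarrow> (\<exists>z l. l > 0 \<and> Q = cube z l)"

text \<open>Center and side length of a (genuine) cube; they are uniquely determined.\<close>
definition cube_center :: "'a::euclidean_space set \<Rightarrow> 'a" where
  "cube_center Q = (SOME z. \<exists>l>0. Q = cube z l)"

definition cube_side :: "'a::euclidean_space set \<Rightarrow> real" where
  "cube_side Q = (SOME l. l > 0 \<and> (\<exists>z. Q = cube z l))"

text \<open>The concentric dilate \<open>\<rho>Q\<close>; the whole space (which may belong to the family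
  of cubes) is its own dilate.\<close>
definition dil :: "real \<Rightarrow> 'a::euclidean_space set \<Rightarrow> 'a set" where
  "dil \<rho> Q = (if Q = UNIV then UNIV else cube (cube_center Q) (\<rho> * cube_side Q))"

definition radon_measure :: "'a::euclidean_space measure \<Rightarrow> bool" where
  "radon_measure mu \<longleftrightarrow> sets mu = sets borel \<and> (\<forall>K. compact K \<longrightarrow> emeasure mu K < \<infinity>)"

definition msupp :: "'a::euclidean_space measure \<Rightarrow> 'a set" where
  "msupp mu = {x. \<forall>e>0. emeasure mu (ball x e) > 0}"

definition growth :: "'a::euclidean_space measure \<Rightarrow> real \<Rightarrow> real \<Rightarrow> bool" where
  "growth mu C0 n \<longleftrightarrow>
     (\<forall>x\<in>msupp mu. \<forall>l>0. emeasure mu (cube x l) \<le> ennreal (C0 * l powr n))"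

definition Qcubes :: "'a::euclidean_space measure \<Rightarrow> 'a set set" where
  "Qcubes mu = {Q. is_cube Q \<and> emeasure mu Q > 0}
      \<union> {Q. Q = UNIV \<and> 0 < emeasure mu UNIV \<and> emeasure mu UNIV < \<infinity>}"

definition doubling :: "'a::euclidean_space measure \<Rightarrow> 'a set \<Rightarrow> bool" where
  "doubling mu Q \<longleftrightarrow> Q \<in> Qcubes mu \<and>
     emeasure mu (dil 2 Q) \<le> 2 ^ (DIM('a) + 1) * emeasure mu Q"

definition Qdoubling :: "'a::euclidean_space measure \<Rightarrow> 'a set set" where
  "Qdoubling mu = {Q. doubling mu Q}"

definition star :: "'a::euclidean_space measure \<Rightarrow> 'a set \<Rightarrow> 'a set" where
  "star mu Q = dil (2 ^ (LEAST j::nat. doubling mu (dil (2 ^ j) Q))) Q"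

text \<open>\<open>\<delta>(Q,R) = \<integral>_{\<ell>(Q)}^{\<ell>(Q_R)} \<mu>(Q(z_Q,l)) l^{-n} dl/l\<close>.  The interval
  \<open>[\<ell>(Q), \<ell>(Q_R))\<close> is exactly the set of \<open>l \<ge> \<ell>(Q)\<close> for which the concentric cube
  of side \<open>l\<close> does not contain \<open>R\<close> (for \<open>R = \<real>\<^sup>d\<close> this is \<open>[\<ell>(Q),\<infinity>)\<close>).\<close>
definition delta :: "'a::euclidean_space measure \<Rightarrow> real \<Rightarrow> 'a set \<Rightarrow> 'a set \<Rightarrow> ennreal" where
  "delta mu n Q R = (if Q = UNIV then 0 else
     (\<integral>\<^sup>+ l. indicator {l. cube_side Q \<le> l \<and> \<not> R \<subseteq> cube (cube_center Q) l} l *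
        emeasure mu (cube (cube_center Q) l) * ennreal (l powr (- n) / l) \<partial>lborel))"

definition Kcoef :: "'a::euclidean_space measure \<Rightarrow> real \<Rightarrow> 'a set \<Rightarrow> 'a set \<Rightarrow> ennreal" where
  "Kcoef mu n Q R = 1 + delta mu n Q R"

definition mean :: "'a::euclidean_space measure \<Rightarrow> 'a set \<Rightarrow> ('a \<Rightarrow> real) \<Rightarrow> real" where
  "mean mu Q f = (\<integral>x\<in>Q. f x \<partial>mu) / measure mu Q"

definition L1_loc :: "'a::euclidean_space measure \<Rightarrow> ('a \<Rightarrow> real) \<Rightarrow> bool" where
  "L1_loc mu f \<longleftrightarrow> f \<in> borel_measurable mu \<and> (\<forall>K. compact K \<longrightarrow> set_integrable mu K f)"

definition enn_powr :: "ennreal \<Rightarrow> real \<Rightarrow> ennreal" where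
  "enn_powr I a = (if I = \<infinity> then \<infinity> else ennreal (enn2real I powr a))"

definition normC :: "'a::euclidean_space measure \<Rightarrow> real \<Rightarrow> real \<Rightarrow> real \<Rightarrow> ('a \<Rightarrow> real) \<Rightarrow> ennreal" where
  "normC mu n p q f =
     (SUP Q\<in>Qcubes mu. ennreal (measure mu (dil 2 Q) powr (1/p - 1/q)) *
        enn_powr (\<integral>\<^sup>+ x\<in>Q. ennreal (\<bar>f x - mean mu (star mu Q) f\<bar> powr q) \<partial>mu) (1/q))
   + (SUP (Q, R)\<in>{(Q, R). Q \<in> Qdoubling mu \<and> R \<in> Qdoubling mu \<and> Q \<subseteq> R}.
        ennreal (measure mu Q powr (1/p) * \<bar>mean mu Q f - mean mu R f\<bar>) / Kcoef mu n Q R)"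

definition in_C :: "'a::euclidean_space measure \<Rightarrow> real \<Rightarrow> real \<Rightarrow> real \<Rightarrow> ('a \<Rightarrow> real) \<Rightarrow> bool" where
  "in_C mu n p q f \<longleftrightarrow> L1_loc mu f \<and> normC mu n p q f < \<infinity>"

definition normM :: "'a::euclidean_space measure \<Rightarrow> real \<Rightarrow> real \<Rightarrow> ('a \<Rightarrow> real) \<Rightarrow> ennreal" where
  "normM mu p q f =
     (SUP Q\<in>Qcubes mu. ennreal (measure mu (dil 2 Q) powr (1/p - 1/q)) *
        enn_powr (\<integral>\<^sup>+ x\<in>Q. ennreal (\<bar>f x\<bar> powr q) \<partial>mu) (1/q))"

text \<open>\<open>lim_{Q \<in> \<Q>(\<mu>,2)} m_Q(f) = 0\<close> along the family directed by inclusion.\<close>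
definition mean_lim_zero :: "'a::euclidean_space measure \<Rightarrow> ('a \<Rightarrow> real) \<Rightarrow> bool" where
  "mean_lim_zero mu f \<longleftrightarrow>
     (\<forall>\<epsilon>>0. \<exists>Q\<in>Qdoubling mu. \<forall>R\<in>Qdoubling mu. Q \<subseteq> R \<longrightarrow> \<bar>mean mu R f\<bar> \<le> \<epsilon>)"

end

(*
  The Morrey norm controls the oscillation part of the C-norm through the quasi-triangle inequality
  in L^q(Q) and Hoelder's inequality |m_S f| mu(S)^(1/q) <= ||f||_{L^q(S)}, because the measures of a
  doubling cube S and of 2S are comparable.

  Conversely, it suffices to bound mu(S)^(1/p) |m_S f| for doubling S by the C-norm.  The growth
  condition provides, for every doubling cube S, a doubling successor T (a dilate 2^j S or the whole
  space) with mu(T) >= 2 mu(S) and K_{S,T} bounded by a constant: between consecutive dilates that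
  fail to be doubling the mass grows by the factor 2^(d+1), faster than the growth condition permits,
  so delta(S,T) is dominated by a geometric series.  Along the resulting chain S = R_0, R_1, ... the
  mean-difference part of the C-norm gives |m_{R_k} f - m_{R_(k+1)} f| <= K ||f|| mu(S)^(-1/p) 2^(-k/p),
  and the chain exhausts all cubes, so the hypothesis that the means tend to 0 bounds |m_S f| by
  the sum of the geometric series.
*)

theory Submission
  imports Defs
begin

section \<open>Cubes\<close>

lemma mem_cube: "y \<in> cube z l \<longleftrightarrow> (\<forall>i\<in>Basis. \<bar>y \<bullet> i - z \<bullet> i\<bar> \<le> l/2)"
proof -
  have "(c - l/2 \<le> a \<and> a \<le> c + l/2) \<longleftrightarrow> \<bar>a - c\<bar> \<le> l/2" for a c :: real
    by arith
  then show ?thesis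
    unfolding cube_def mem_box by (simp add: inner_simps)
qed

lemma cube_mono: "l \<le> l' \<Longrightarrow> cube z l \<subseteq> cube z l'"
  by (auto simp: mem_cube) (smt (verit) field_sum_of_halves)

lemma cube_subset_double_cube: "x \<in> cube z l \<Longrightarrow> cube z l \<subseteq> cube x (2 * l)"
  by (auto simp: mem_cube) (smt (verit))

lemma compact_cube [simp]: "compact (cube z l)"
  by (simp add: cube_def)

lemma cube_neq_UNIV [simp]: "cube z l \<noteq> UNIV"
  using compact_imp_bounded[OF compact_cube] not_bounded_UNIV by metis

lemma center_in_cube: "0 \<le> l \<Longrightarrow> z \<in> cube z l"
  by (auto simp: mem_cube)

lemma cube_eq_cube:
  assumes "0 < l" "0 < l'" "cube z l = cube z' l'"
  shows "z = z' \<and> l = l'"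
proof -
  have "cube z l \<noteq> {}"
    using center_in_cube[of l z] assms by auto
  then have lo: "z - (l/2) *\<^sub>R One = z' - (l'/2) *\<^sub>R One" and hi: "z + (l/2) *\<^sub>R One = z' + (l'/2) *\<^sub>R One"
    using assms(3) unfolding cube_def eq_cbox by auto
  have "z = z'"
    using arg_cong2[OF lo hi, of "(+)"] by (simp add: algebra_simps flip: scaleR_2)
  moreover obtain i :: 'a where "i \<in> Basis"
    using nonempty_Basis by blast
  ultimately show ?thesis
    using arg_cong[OF hi, of "\<lambda>v. v \<bullet> i"] by (simp add: inner_simps)
qed

lemma cube_center_cube [simp]: "0 < l \<Longrightarrow> cube_center (cube z l) = z"
  unfolding cube_center_def by (rule some_equality) (auto dest: cube_eq_cube)

lemma cube_side_cube [simp]: "0 < l \<Longrightarrow> cube_side (cube z l) = l"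
  unfolding cube_side_def by (rule some_equality) (auto dest: cube_eq_cube)

lemma dil_cube [simp]: "0 < l \<Longrightarrow> dil r (cube z l) = cube z (r * l)"
  by (simp add: dil_def)

lemma dil_UNIV [simp]: "dil r UNIV = UNIV"
  by (simp add: dil_def)

lemma bounded_subset_cube:
  assumes "bounded S"
  obtains M where "0 < M" "S \<subseteq> cube z M"
proof -
  obtain r where r: "0 < r" "\<forall>x\<in>S. norm x \<le> r"
    using assms bounded_pos by blast
  have "S \<subseteq> cube z (2 * (r + norm z))"
  proof
    fix x assume "x \<in> S"
    then have "norm x \<le> r"
      using r by auto
    moreover have "\<bar>x \<bullet> i - z \<bullet> i\<bar> \<le> norm x + norm z" if "i \<in> Basis" for i
      using Basis_le_norm[OF that, of x] Basis_le_norm[OF that, of z] by linarith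
    ultimately show "x \<in> cube z (2 * (r + norm z))"
      unfolding mem_cube by fastforce
  qed
  then show ?thesis
    using that r by (meson add_pos_nonneg norm_ge_zero zero_less_mult_iff zero_less_numeral)
qed

lemma UN_cube_of_nat_eq_UNIV: "(\<Union>k::nat. cube z (real k)) = UNIV"
proof -
  have "x \<in> (\<Union>k::nat. cube z (real k))" for x
  proof -
    obtain M where "0 < M" "{x} \<subseteq> cube z M"
      using bounded_subset_cube[of "{x}" z] by auto
    moreover obtain k :: nat where "M < real k"
      using reals_Archimedean2 by blast
    ultimately show ?thesis
      using cube_mono[of M "real k" z] by auto
  qed
  then show ?thesis by blast
qed

section \<open>Elementary inequalities\<close>

lemma ennreal_two_power: "(2::ennreal) ^ k = ennreal (2 ^ k)"
  by (metis ennreal_numeral ennreal_power zero_le_numeral)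

lemma two_power_powr: "((2::real) ^ i) powr x = (2 powr x) ^ i"
  by (induction i) (simp_all add: powr_mult)

lemma powr_add_le_add_powr:
  fixes x y s :: real
  assumes "0 \<le> x" "0 \<le> y" "0 < s" "s \<le> 1"
  shows "(x + y) powr s \<le> x powr s + y powr s"
proof (cases "x + y = 0")
  case True
  then show ?thesis
    using assms by simp
next
  case False
  then have xy: "0 < x + y"
    using assms by auto
  have "z * (x + y) powr (s - 1) \<le> z powr s" if "0 \<le> z" "z \<le> x + y" for z
  proof (cases "z = 0")
    case False
    then have "0 < z"
      using that by auto
    then have "z * (x + y) powr (s - 1) \<le> z * z powr (s - 1)"
      using that assms by (intro mult_left_mono powr_mono2') auto
    also have "\<dots> = z powr s"
      using \<open>0 < z\<close> by (simp add: powr_mult_base)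
    finally show ?thesis .
  qed (use assms in simp)
  moreover have "(x + y) powr s = x * (x + y) powr (s - 1) + y * (x + y) powr (s - 1)"
    using xy by (simp add: powr_mult_base distrib_right flip: distrib_right)
  ultimately show ?thesis
    using assms by (smt (verit))
qed

lemma abs_add_powr_le:
  fixes u v q :: real
  assumes "0 \<le> q"
  shows "\<bar>u + v\<bar> powr q \<le> 2 powr q * (\<bar>u\<bar> powr q + \<bar>v\<bar> powr q)"
proof -
  have "\<bar>u + v\<bar> powr q \<le> (2 * max \<bar>u\<bar> \<bar>v\<bar>) powr q"
    using assms by (intro powr_mono2) auto
  also have "\<dots> = 2 powr q * max \<bar>u\<bar> \<bar>v\<bar> powr q"
    by (simp add: powr_mult)
  also have "max \<bar>u\<bar> \<bar>v\<bar> powr q \<le> \<bar>u\<bar> powr q + \<bar>v\<bar> powr q"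
    by (simp add: max_def)
  finally show ?thesis
    by simp
qed

lemma Young_inequality_linear:
  fixes t c q :: real
  assumes "0 \<le> t" "0 < c" "1 \<le> q"
  shows "t \<le> t powr q / (q * c powr (q - 1)) + c * (1 - 1/q)"
proof (cases "t = 0")
  case True
  then show ?thesis
    using assms by (simp add: divide_le_eq_1)
next
  case False
  then have t: "0 < t"
    using assms by auto
  have "((t/c) powr q) powr (1/q) * 1 powr (1 - 1/q) \<le> (1/q) * (t/c) powr q + (1 - 1/q) * 1"
    using t assms by (intro Youngs_inequality_0) (auto simp: divide_le_eq_1)
  then have "t/c \<le> (1/q) * (t/c) powr q + (1 - 1/q)"
    using t assms by (simp add: powr_powr)
  then have "c * (t/c) \<le> c * ((1/q) * (t/c) powr q + (1 - 1/q))"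
    using assms(2) by (intro mult_left_mono) auto
  then have "t \<le> c * ((1/q) * (t/c) powr q) + c * (1 - 1/q)"
    using assms(2) by (simp add: distrib_left)
  moreover have "c powr (q - 1) = c powr q / c"
    using assms by (simp add: powr_diff)
  then have "c * ((1/q) * (t/c) powr q) = t powr q / (q * c powr (q - 1))"
    using t assms by (simp add: powr_divide field_simps)
  ultimately show ?thesis
    by simp
qed

lemma enn_powr_ennreal [simp]: "0 \<le> x \<Longrightarrow> enn_powr (ennreal x) a = ennreal (x powr a)"
  by (simp add: enn_powr_def)

lemma enn_powr_top [simp]: "enn_powr top a = top"
  by (simp add: enn_powr_def)

lemma enn_powr_mono:
  assumes "0 \<le> a" "I \<le> J"
  shows "enn_powr I a \<le> enn_powr J a"
proof (cases J rule: ennreal_cases)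
  case (real j)
  then obtain i where i: "I = ennreal i" "0 \<le> i" "i \<le> j"
    using assms by (cases I rule: ennreal_cases) (auto simp: top_unique ennreal_le_iff)
  then show ?thesis
    using real assms by (simp add: powr_mono2)
qed simp

lemma enn_powr_add_le:
  assumes "0 < a" "a \<le> 1"
  shows "enn_powr (I + J) a \<le> enn_powr I a + enn_powr J a"
proof (cases I rule: ennreal_cases)
  case I: (real i)
  show ?thesis
  proof (cases J rule: ennreal_cases)
    case (real j)
    then show ?thesis
      using I assms by (simp add: powr_add_le_add_powr flip: ennreal_plus)
  qed simp
qed simp

lemma enn_powr_mult:
  assumes "0 \<le> c" "0 < a"
  shows "enn_powr (ennreal c * I) a = ennreal (c powr a) * enn_powr I a"
proof (cases I rule: ennreal_cases)
  case (real i)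
  then show ?thesis
    using assms by (simp add: powr_mult flip: ennreal_mult)
next
  case top
  then show ?thesis
    using assms by (cases "c = 0") (auto simp: ennreal_mult_top enn_powr_def)
qed

lemma dyadic_index:
  fixes l t :: real
  assumes "0 < l" "l \<le> t"
  obtains i :: nat where "2 ^ i * l \<le> t" "t < 2 ^ Suc i * l"
proof -
  obtain k :: nat where "t / l < 2 ^ k"
    using real_arch_pow[of 2 "t / l"] by auto
  then have ex: "\<exists>i. t < 2 ^ Suc i * l"
    using assms by (auto simp: divide_less_eq intro!: exI[of _ k])
  define i where "i = (LEAST i. t < 2 ^ Suc i * l)"
  have "t < 2 ^ Suc i * l"
    unfolding i_def by (rule LeastI_ex[OF ex])
  moreover have "2 ^ i * l \<le> t"
  proof (cases i)
    case (Suc i')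
    then have "\<not> t < 2 ^ Suc i' * l"
      using not_less_Least[of i' "\<lambda>i. t < 2 ^ Suc i * l"] unfolding i_def by auto
    then show ?thesis
      using Suc by simp
  qed (use assms in simp)
  ultimately show ?thesis
    using that by blast
qed

lemma geometric_sum_le:
  fixes x :: real
  assumes "0 \<le> x" "x < 1"
  shows "(\<Sum>i<j. x ^ i) \<le> 1 / (1 - x)"
  using assms by (simp add: sum_gp_strict divide_right_mono)

lemma abs_diff_le_geometric_bound:
  fixes a :: "nat \<Rightarrow> real"
  assumes "\<And>k. \<bar>a k - a (Suc k)\<bar> \<le> A * \<rho> ^ k" "0 \<le> A" "0 \<le> \<rho>" "\<rho> < 1"
  shows "\<bar>a 0 - a k\<bar> \<le> A / (1 - \<rho>)"
proof -
  have "\<bar>a 0 - a k\<bar> = \<bar>\<Sum>i<k. a i - a (Suc i)\<bar>"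
    by (simp add: sum_lessThan_telescope')
  also have "\<dots> \<le> (\<Sum>i<k. A * \<rho> ^ i)"
    by (rule order.trans[OF sum_abs sum_mono]) (rule assms(1))
  also have "\<dots> = A * (\<Sum>i<k. \<rho> ^ i)"
    by (simp add: sum_distrib_left)
  also have "\<dots> \<le> A * (1 / (1 - \<rho>))"
    using assms by (intro mult_left_mono geometric_sum_le) auto
  finally show ?thesis
    by simp
qed

lemma powr_neg_div_antimono:
  fixes s t n :: real
  assumes "0 < s" "s \<le> t" "0 \<le> n"
  shows "t powr (- n) / t \<le> s powr (- n) / s"
proof -
  have "t powr (- n) \<le> s powr (- n)"
    using assms by (intro powr_mono2') auto
  then show ?thesis
    using assms by (intro frac_le) auto
qed

lemma dilate_decay_le:
  fixes l C n :: real and d i j :: nat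
  assumes l: "0 < l" and C: "0 \<le> C" and n: "0 < n" "n \<le> real d" and ij: "i < j"
  shows "C * (2 * (2 ^ j * l)) powr n * (1 / 2 ^ (d + 1)) ^ (j - Suc i) * (2 ^ i * l) powr (- n)
    \<le> C * 4 powr n * (1/2) ^ (j - Suc i)"
proof -
  define s where "s = j - Suc i"
  define a :: real where "a = 2 powr n"
  have j: "j = i + Suc s"
    using ij by (simp add: s_def)
  have a: "0 < a" "a \<le> 2 ^ d"
    using n by (auto simp: a_def powr_realpow intro: order.trans[OF powr_mono])
  have a2: "a * a = 4 powr n"
    by (simp add: a_def flip: powr_mult)
  have e1: "(2 * (2 ^ j * l)) powr n = a * a ^ j * l powr n"
    using l by (simp add: powr_mult two_power_powr a_def)
  have e2: "(2 ^ i * l) powr (- n) = (1/a) ^ i * l powr (- n)"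
    using l by (simp add: powr_mult two_power_powr a_def powr_minus_divide power_one_over)
  have e3: "a ^ j * (1/a) ^ i = a ^ Suc s"
    using a j by (simp add: power_add field_simps)
  have e4: "l powr n * l powr (- n) = 1"
    using l by (simp flip: powr_add)
  have "C * (2 * (2 ^ j * l)) powr n * (1 / 2 ^ (d + 1)) ^ s * (2 ^ i * l) powr (- n)
      = C * a * (a ^ j * (1/a) ^ i) * (l powr n * l powr (- n)) * (1 / 2 ^ (d + 1)) ^ s"
    unfolding e1 e2 by (simp add: algebra_simps)
  also have "\<dots> = C * a * a * (a / 2 ^ (d + 1)) ^ s"
    unfolding e3 e4 by (simp add: power_divide algebra_simps)
  also have "\<dots> \<le> C * a * a * (1/2) ^ s"
    using a C by (intro mult_left_mono power_mono) (auto simp: divide_le_eq)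
  also have "\<dots> = C * 4 powr n * (1/2) ^ s"
    using a2 by (simp add: mult.assoc)
  finally show ?thesis
    by (simp add: s_def)
qed

lemma ennreal_divide_le_self:
  assumes "1 \<le> K"
  shows "x / K \<le> (x::ennreal)"
proof (rule divide_le_posI_ennreal)
  show "0 < K"
    using zero_less_one assms by (rule order.strict_trans2)
  show "x \<le> K * x"
    using mult_right_mono[OF assms, of x] by simp
qed

lemma ennreal_inverse_mult_le:
  assumes "0 < C" "x \<le> ennreal C * y"
  shows "ennreal (1 / C) * x \<le> y"
proof -
  have "ennreal (1 / C) * x \<le> ennreal (1 / C) * (ennreal C * y)"
    using assms(2) by (rule mult_left_mono) simp
  also have "\<dots> = y"
    using assms(1) by (simp flip: mult.assoc ennreal_mult)
  finally show ?thesis .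
qed

section \<open>Local \<open>L\<^sup>q\<close> estimates and the two norms\<close>

lemma Lq_norm_add_const_le:
  assumes Q: "Q \<in> sets M" and m: "emeasure M Q = ennreal m" "0 \<le> m" and q: "1 \<le> q"
    and g: "g \<in> borel_measurable M"
  shows "enn_powr (\<integral>\<^sup>+x\<in>Q. ennreal (\<bar>g x + c\<bar> powr q) \<partial>M) (1/q)
    \<le> 2 * (enn_powr (\<integral>\<^sup>+x\<in>Q. ennreal (\<bar>g x\<bar> powr q) \<partial>M) (1/q) + ennreal (\<bar>c\<bar> * m powr (1/q)))"
proof -
  define I where "I = (\<integral>\<^sup>+x\<in>Q. ennreal (\<bar>g x\<bar> powr q) \<partial>M)"
  have "(\<integral>\<^sup>+x\<in>Q. ennreal (\<bar>g x + c\<bar> powr q) \<partial>M)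
      \<le> (\<integral>\<^sup>+x. ennreal (2 powr q) * (ennreal (\<bar>g x\<bar> powr q) * indicator Q x)
            + ennreal (2 powr q) * (ennreal (\<bar>c\<bar> powr q) * indicator Q x) \<partial>M)"
  proof (intro nn_integral_mono)
    fix x
    have "ennreal (\<bar>g x + c\<bar> powr q) \<le> ennreal (2 powr q) * ennreal (\<bar>g x\<bar> powr q)
       + ennreal (2 powr q) * ennreal (\<bar>c\<bar> powr q)"
      using abs_add_powr_le[of q "g x" c] q
      by (simp add: distrib_left flip: ennreal_mult ennreal_plus)
    then show "ennreal (\<bar>g x + c\<bar> powr q) * indicator Q x
      \<le> ennreal (2 powr q) * (ennreal (\<bar>g x\<bar> powr q) * indicator Q x)
            + ennreal (2 powr q) * (ennreal (\<bar>c\<bar> powr q) * indicator Q x)"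
      by (auto split: split_indicator)
  qed
  also have "\<dots> = ennreal (2 powr q) * (I + ennreal (\<bar>c\<bar> powr q * m))"
    using Q g m unfolding I_def
    by (subst nn_integral_add) (auto simp: nn_integral_cmult nn_integral_cmult_indicator
        distrib_left ennreal_mult)
  finally have "enn_powr (\<integral>\<^sup>+x\<in>Q. ennreal (\<bar>g x + c\<bar> powr q) \<partial>M) (1/q)
      \<le> enn_powr (ennreal (2 powr q) * (I + ennreal (\<bar>c\<bar> powr q * m))) (1/q)"
    using q by (intro enn_powr_mono) auto
  also have "\<dots> = 2 * enn_powr (I + ennreal (\<bar>c\<bar> powr q * m)) (1/q)"
    using q by (subst enn_powr_mult) (auto simp: powr_powr)
  also have "\<dots> \<le> 2 * (enn_powr I (1/q) + enn_powr (ennreal (\<bar>c\<bar> powr q * m)) (1/q))"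
    using q by (intro mult_left_mono enn_powr_add_le) auto
  also have "enn_powr (ennreal (\<bar>c\<bar> powr q * m)) (1/q) = ennreal (\<bar>c\<bar> * m powr (1/q))"
    using q m by (simp add: powr_mult powr_powr)
  finally show ?thesis
    unfolding I_def .
qed

lemma nn_integral_abs_le_Lq_norm:
  assumes Q: "Q \<in> sets M" and m: "emeasure M Q = ennreal m" "0 < m" and q: "1 \<le> q"
    and f: "f \<in> borel_measurable M" and I: "(\<integral>\<^sup>+x\<in>Q. ennreal (\<bar>f x\<bar> powr q) \<partial>M) = ennreal I" "0 \<le> I"
  shows "(\<integral>\<^sup>+x\<in>Q. ennreal \<bar>f x\<bar> \<partial>M) \<le> ennreal (I powr (1/q) * m powr (1 - 1/q))"
proof (cases "I = 0")
  case True
  then have "AE x in M. ennreal (\<bar>f x\<bar> powr q) * indicator Q x = 0"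
    using I f Q by (subst nn_integral_0_iff_AE[symmetric]) auto
  then have "AE x in M. ennreal \<bar>f x\<bar> * indicator Q x = 0"
    by eventually_elim (auto split: split_indicator)
  then show ?thesis
    using f Q by (subst nn_integral_0_iff_AE[THEN iffD2]) auto
next
  case False
  define c where "c = (I / m) powr (1/q)"
  have c: "0 < c" "c powr q = I / m"
    using False I m q by (auto simp: c_def powr_powr)
  have "(\<integral>\<^sup>+x\<in>Q. ennreal \<bar>f x\<bar> \<partial>M)
      \<le> (\<integral>\<^sup>+x. ennreal (1 / (q * c powr (q - 1))) * (ennreal (\<bar>f x\<bar> powr q) * indicator Q x)
            + ennreal (c * (1 - 1/q)) * indicator Q x \<partial>M)"
  proof (intro nn_integral_mono)
    fix x
    have "ennreal \<bar>f x\<bar> \<le> ennreal (1 / (q * c powr (q - 1))) * ennreal (\<bar>f x\<bar> powr q) + ennreal (c * (1 - 1/q))"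
      using Young_inequality_linear[of "\<bar>f x\<bar>" c q] c q
      by (simp add: divide_le_eq_1 flip: ennreal_mult ennreal_plus)
    then show "ennreal \<bar>f x\<bar> * indicator Q x \<le> ennreal (1 / (q * c powr (q - 1))) * (ennreal (\<bar>f x\<bar> powr q) * indicator Q x)
            + ennreal (c * (1 - 1/q)) * indicator Q x"
      by (auto split: split_indicator)
  qed
  also have "\<dots> = ennreal (I / (q * c powr (q - 1)) + c * (1 - 1/q) * m)"
    using Q f I c q m
    by (subst nn_integral_add) (auto simp: nn_integral_cmult nn_integral_cmult_indicator
        divide_le_eq_1 simp flip: ennreal_mult ennreal_plus)
  also have "I / (q * c powr (q - 1)) + c * (1 - 1/q) * m = c * m"
    using c m q by (simp add: powr_diff field_simps)
  also have "c * m = I powr (1/q) * m powr (1 - 1/q)"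
    using I m by (simp add: c_def powr_divide powr_diff)
  finally show ?thesis .
qed

lemma abs_mean_le_Lq_norm:
  assumes Q: "Q \<in> sets M" and m: "emeasure M Q = ennreal m" "0 < m" and q: "1 \<le> q"
    and f: "f \<in> borel_measurable M"
  shows "ennreal (\<bar>mean M Q f\<bar> * m powr (1/q)) \<le> enn_powr (\<integral>\<^sup>+x\<in>Q. ennreal (\<bar>f x\<bar> powr q) \<partial>M) (1/q)"
proof (cases "\<integral>\<^sup>+x\<in>Q. ennreal (\<bar>f x\<bar> powr q) \<partial>M" rule: ennreal_cases)
  case (real I)
  have "ennreal \<bar>\<integral>x\<in>Q. f x \<partial>M\<bar> \<le> (\<integral>\<^sup>+x\<in>Q. ennreal \<bar>f x\<bar> \<partial>M)"
  proof (cases "set_integrable M Q f")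
    case True
    then have "ennreal (norm (\<integral>x. indicator Q x *\<^sub>R f x \<partial>M)) \<le> (\<integral>\<^sup>+x. norm (indicator Q x *\<^sub>R f x) \<partial>M)"
      unfolding set_integrable_def by (rule integral_norm_bound_ennreal)
    also have "\<dots> = (\<integral>\<^sup>+x\<in>Q. ennreal \<bar>f x\<bar> \<partial>M)"
      by (intro nn_integral_cong) (auto split: split_indicator)
    finally show ?thesis
      by (simp add: set_lebesgue_integral_def)
  qed (simp add: set_lebesgue_integral_def set_integrable_def not_integrable_integral_eq)
  also have "\<dots> \<le> ennreal (I powr (1/q) * m powr (1 - 1/q))"
    using nn_integral_abs_le_Lq_norm[OF Q m q f real(2,1)] .
  finally have "\<bar>\<integral>x\<in>Q. f x \<partial>M\<bar> * m powr (1/q - 1) \<le> I powr (1/q) * m powr (1 - 1/q) * m powr (1/q - 1)"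
    by (intro mult_right_mono) (auto simp: ennreal_le_iff)
  moreover have "measure M Q = m"
    using m by (simp add: measure_def)
  ultimately show ?thesis
    using m real by (simp add: mean_def powr_diff mult.assoc flip: powr_add)
qed simp

lemma abs_mean_le_if_cofinal:
  assumes lim: "mean_lim_zero mu f"
    and cofinal: "\<And>Q. Q \<in> Qdoubling mu \<Longrightarrow> \<exists>R\<in>Qdoubling mu. Q \<subseteq> R \<and> \<bar>mean mu S f - mean mu R f\<bar> \<le> B"
  shows "\<bar>mean mu S f\<bar> \<le> B"
proof (rule field_le_epsilon)
  fix e :: real assume "0 < e"
  then obtain Q where Q: "Q \<in> Qdoubling mu" "\<forall>R\<in>Qdoubling mu. Q \<subseteq> R \<longrightarrow> \<bar>mean mu R f\<bar> \<le> e"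
    using lim unfolding mean_lim_zero_def by blast
  then obtain R where "R \<in> Qdoubling mu" "Q \<subseteq> R" "\<bar>mean mu S f - mean mu R f\<bar> \<le> B"
    using cofinal by blast
  then show "\<bar>mean mu S f\<bar> \<le> B + e"
    using Q(2) by fastforce
qed

lemma mean_diff_le_normC:
  assumes "doubling mu Q" "doubling mu R" "Q \<subseteq> R"
    and K: "Kcoef mu n Q R \<le> ennreal K" "0 \<le> K" and N: "normC mu n p q f \<le> ennreal N" "0 \<le> N"
  shows "measure mu Q powr (1/p) * \<bar>mean mu Q f - mean mu R f\<bar> \<le> K * N"
proof -
  define x where "x = measure mu Q powr (1/p) * \<bar>mean mu Q f - mean mu R f\<bar>"
  define k where "k = Kcoef mu n Q R"
  have normC: "ennreal x / k \<le> normC mu n p q f"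
    unfolding normC_def x_def k_def
    by (rule add_increasing[OF zero_le SUP_upper2[of "(Q, R)"]]) (use assms in \<open>auto simp: Qdoubling_def\<close>)
  moreover have "k \<noteq> 0"
    by (simp add: k_def Kcoef_def)
  moreover have "k < top"
    using K(1) unfolding k_def by (rule order.strict_trans1) simp
  ultimately have "ennreal x = ennreal x / k * k"
    by (simp add: ennreal_divide_times)
  also have "\<dots> \<le> ennreal N * ennreal K"
    using normC N K by (intro mult_mono) (auto simp: k_def)
  finally have "ennreal x \<le> ennreal N * ennreal K" .
  then have "ennreal x \<le> ennreal (K * N)"
    using K N by (simp add: ennreal_mult' mult.commute)
  then show ?thesis
    using K N by (simp add: x_def)
qed

lemma normM_summand_le:
  "Q \<in> Qcubes mu \<Longrightarrow> ennreal (measure mu (dil 2 Q) powr (1/p - 1/q)) *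
     enn_powr (\<integral>\<^sup>+x\<in>Q. ennreal (\<bar>f x\<bar> powr q) \<partial>mu) (1/q) \<le> normM mu p q f"
  unfolding normM_def by (rule SUP_upper)

lemma normC_oscillation_summand_le:
  "Q \<in> Qcubes mu \<Longrightarrow> ennreal (measure mu (dil 2 Q) powr (1/p - 1/q)) *
     enn_powr (\<integral>\<^sup>+x\<in>Q. ennreal (\<bar>f x - mean mu (star mu Q) f\<bar> powr q) \<partial>mu) (1/q) \<le> normC mu n p q f"
  unfolding normC_def by (rule add_increasing2[OF _ SUP_upper]) auto

section \<open>Measures with the growth condition\<close>

locale growth_measure =
  fixes mu :: "'a::euclidean_space measure" and C0 n :: real
  assumes radon: "radon_measure mu" and C0_pos: "0 < C0" and n_pos: "0 < n"
    and n_le_DIM: "n \<le> real DIM('a)" and growth: "growth mu C0 n"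
begin

lemma sets_mu [simp]: "sets mu = sets borel"
  using radon by (simp add: radon_measure_def)

lemma cube_borel [simp]: "cube z l \<in> sets borel"
  by (simp add: borel_closed compact_imp_closed)

lemma cube_sets: "cube z l \<in> sets mu"
  by simp

lemma emeasure_cube_finite: "emeasure mu (cube z l) < \<infinity>"
  using radon compact_cube[of z l] by (auto simp: radon_measure_def)

lemma emeasure_cube: "emeasure mu (cube z l) = ennreal (measure mu (cube z l))"
  using emeasure_cube_finite[of z l] by (intro emeasure_eq_ennreal_measure) auto

lemma cube_fmeasurable: "cube z l \<in> fmeasurable mu"
  using emeasure_cube[of z l] by (intro fmeasurableI) auto

lemma measure_cube_mono: "l \<le> l' \<Longrightarrow> measure mu (cube z l) \<le> measure mu (cube z l')"
  by (intro measure_mono_fmeasurable cube_mono cube_sets cube_fmeasurable)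

lemma ex_msupp_in_compact:
  assumes "compact K" "0 < emeasure mu K"
  shows "\<exists>x\<in>K. x \<in> msupp mu"
proof (rule ccontr)
  assume "\<not> ?thesis"
  then have "\<forall>x\<in>K. \<exists>e>0. emeasure mu (ball x e) = 0"
    by (auto simp: msupp_def not_less)
  then obtain r where r: "\<forall>x\<in>K. 0 < r x \<and> emeasure mu (ball x (r x)) = 0"
    by metis
  then have "K \<subseteq> (\<Union>x\<in>K. ball x (r x))"
    by auto
  then obtain D where D: "D \<subseteq> K" "finite D" "K \<subseteq> (\<Union>x\<in>D. ball x (r x))"
    using compactE_image[OF assms(1), of K "\<lambda>x. ball x (r x)"] by auto
  have "emeasure mu K \<le> emeasure mu (\<Union>x\<in>D. ball x (r x))"
    using D by (intro emeasure_mono) auto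
  also have "\<dots> \<le> (\<Sum>x\<in>D. emeasure mu (ball x (r x)))"
    using D by (intro emeasure_subadditive_finite) auto
  also have "\<dots> = 0"
    using D r by (auto intro!: sum.neutral)
  finally show False
    using assms(2) by simp
qed

text \<open>The growth condition is only assumed at centres in the support; an arbitrary cube of
  positive measure meets the support and sits in the cube of twice the side around such a point.\<close>
lemma measure_cube_le_growth:
  assumes "0 < l"
  shows "measure mu (cube w l) \<le> C0 * (2 * l) powr n"
proof -
  have "emeasure mu (cube w l) \<le> ennreal (C0 * (2 * l) powr n)"
  proof (cases "emeasure mu (cube w l) = 0")
    case False
    then obtain x where x: "x \<in> cube w l" "x \<in> msupp mu"
      using ex_msupp_in_compact[of "cube w l"] by (auto simp: zero_less_iff_neq_zero)
    have "emeasure mu (cube w l) \<le> emeasure mu (cube x (2 * l))"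
      using cube_subset_double_cube[OF x(1)] by (intro emeasure_mono) auto
    also have "\<dots> \<le> ennreal (C0 * (2 * l) powr n)"
      using growth x(2) assms by (auto simp: growth_def)
    finally show ?thesis .
  qed simp
  then show ?thesis
    using C0_pos by (simp add: emeasure_cube)
qed

lemma measure_cube_powr_le:
  assumes "0 < l"
  shows "measure mu (cube z l) * l powr (- n) \<le> C0 * 2 powr n"
proof -
  have "measure mu (cube z l) * l powr (- n) \<le> C0 * (2 * l) powr n * l powr (- n)"
    using measure_cube_le_growth[OF assms] by (intro mult_right_mono) auto
  also have "\<dots> = C0 * 2 powr n"
    using assms by (simp add: powr_mult mult.assoc flip: powr_add)
  finally show ?thesis .
qed

lemma measure_dilate_cube_le:
  assumes "0 < l"
  shows "measure mu (cube z (2 ^ k * l)) \<le> C0 * (2 * l) powr n * 2 ^ (DIM('a) * k)"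
proof -
  have "measure mu (cube z (2 ^ k * l)) \<le> C0 * (2 * l) powr n * (2 ^ k) powr n"
    using measure_cube_le_growth[of "2 ^ k * l" z] assms by (simp add: powr_mult mult_ac)
  also have "(2 ^ k) powr n \<le> ((2::real) ^ k) powr real DIM('a)"
    using n_le_DIM by (intro powr_mono) auto
  also have "\<dots> = 2 ^ (DIM('a) * k)"
    by (simp add: powr_realpow power_mult mult.commute)
  finally show ?thesis
    using C0_pos by (simp add: mult_left_mono)
qed

lemma Qcubes_cube_iff: "0 < l \<Longrightarrow> cube z l \<in> Qcubes mu \<longleftrightarrow> 0 < measure mu (cube z l)"
  by (auto simp: Qcubes_def is_cube_def emeasure_cube)

lemma doubling_cube_iff:
  "0 < l \<Longrightarrow> doubling mu (cube z l) \<longleftrightarrow>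
     0 < measure mu (cube z l) \<and> measure mu (cube z (2 * l)) \<le> 2 ^ (DIM('a) + 1) * measure mu (cube z l)"
  by (auto simp: doubling_def Qcubes_cube_iff emeasure_cube ennreal_two_power ennreal_le_iff
      simp flip: ennreal_mult simp del: ennreal_numeral power_Suc)

lemma measure_nondoubling_dilates:
  assumes l: "0 < l" and pos: "0 < measure mu (cube z (2 ^ i * l))"
    and nondbl: "\<And>k. i \<le> k \<Longrightarrow> k < i + t \<Longrightarrow> \<not> doubling mu (cube z (2 ^ k * l))"
  shows "2 ^ ((DIM('a) + 1) * t) * measure mu (cube z (2 ^ i * l)) \<le> measure mu (cube z (2 ^ (i + t) * l))"
  using nondbl
proof (induction t)
  case (Suc t)
  let ?m = "\<lambda>k. measure mu (cube z (2 ^ k * l))"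
  have "?m i \<le> ?m (i + t)"
    using l by (intro measure_cube_mono) auto
  then have "0 < ?m (i + t)"
    using pos by linarith
  moreover have "cube z (2 * (2 ^ (i + t) * l)) = cube z (2 ^ (i + Suc t) * l)"
    by (simp add: mult.assoc)
  ultimately have "2 ^ (DIM('a) + 1) * ?m (i + t) < ?m (i + Suc t)"
    using Suc.prems[of "i + t"] l by (simp add: doubling_cube_iff not_le)
  have "2 ^ ((DIM('a) + 1) * Suc t) * ?m i = 2 ^ (DIM('a) + 1) * (2 ^ ((DIM('a) + 1) * t) * ?m i)"
    by (simp add: power_add algebra_simps)
  also have "\<dots> \<le> 2 ^ (DIM('a) + 1) * ?m (i + t)"
    using Suc by (intro mult_left_mono) auto
  finally show ?case
    using \<open>2 ^ (DIM('a) + 1) * ?m (i + t) < ?m (i + Suc t)\<close> by linarith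
qed simp

lemma measure_nondoubling_dilates_decay:
  assumes l: "0 < l" and pos: "0 < measure mu (cube z (2 ^ i * l))"
    and nondbl: "\<And>k. i \<le> k \<Longrightarrow> k < i + t \<Longrightarrow> \<not> doubling mu (cube z (2 ^ k * l))"
  shows "measure mu (cube z (2 ^ i * l)) \<le> measure mu (cube z (2 ^ (i + t) * l)) * (1 / 2 ^ (DIM('a) + 1)) ^ t"
proof -
  have "measure mu (cube z (2 ^ i * l)) \<le> measure mu (cube z (2 ^ (i + t) * l)) / 2 ^ ((DIM('a) + 1) * t)"
    using measure_nondoubling_dilates[OF assms] by (simp add: le_divide_eq mult.commute)
  also have "\<dots> = measure mu (cube z (2 ^ (i + t) * l)) * (1 / 2 ^ (DIM('a) + 1)) ^ t"
    by (simp only: power_mult power_one_over) simp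
  finally show ?thesis .
qed

text \<open>Without a doubling dilate the measures of the dilates \<open>2^k Q\<close> would grow like \<open>2^((d+1)k)\<close>,
  faster than the rate \<open>2^(dk)\<close> permitted by the growth condition.\<close>
lemma ex_doubling_dilate:
  assumes l: "0 < l" and pos: "0 < measure mu (cube z l)"
  shows "\<exists>k. doubling mu (cube z (2 ^ k * l))"
proof (rule ccontr)
  assume "\<not> ?thesis"
  then have lower: "2 ^ ((DIM('a) + 1) * k) * measure mu (cube z l) \<le> measure mu (cube z (2 ^ k * l))" for k
    using measure_nondoubling_dilates[of l z 0 k] l pos by simp
  have "2 ^ (DIM('a) * k) * (2 ^ k * measure mu (cube z l)) \<le> 2 ^ (DIM('a) * k) * (C0 * (2 * l) powr n)" for k
  proof -
    have "2 ^ (DIM('a) * k) * (2 ^ k * measure mu (cube z l)) = 2 ^ ((DIM('a) + 1) * k) * measure mu (cube z l)"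
      by (simp add: power_add algebra_simps)
    also have "\<dots> \<le> C0 * (2 * l) powr n * 2 ^ (DIM('a) * k)"
      using lower[of k] measure_dilate_cube_le[OF l, of z k] by linarith
    finally show ?thesis
      by (simp add: mult.commute)
  qed
  then have bound: "2 ^ k * measure mu (cube z l) \<le> C0 * (2 * l) powr n" for k
    by (simp add: mult_le_cancel_left_pos)
  obtain k :: nat where "C0 * (2 * l) powr n / measure mu (cube z l) < 2 ^ k"
    using real_arch_pow[of 2] by auto
  then show False
    using bound[of k] pos by (simp add: divide_less_eq)
qed

lemma Qcubes_cases:
  assumes "Q \<in> Qcubes mu"
  obtains (UNIV) "Q = UNIV" "emeasure mu UNIV = ennreal (measure mu UNIV)" "0 < measure mu UNIV"
   | (cube) z l where "0 < l" "Q = cube z l" "0 < measure mu (cube z l)"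
proof -
  from assms consider "is_cube Q" "0 < emeasure mu Q"
      | "Q = UNIV" "0 < emeasure mu UNIV" "emeasure mu UNIV < \<infinity>"
    by (auto simp: Qcubes_def)
  then show ?thesis
  proof cases
    case 1
    then show ?thesis
      using cube by (auto simp: is_cube_def emeasure_cube)
  next
    case 2
    then have "emeasure mu UNIV = ennreal (measure mu UNIV)"
      by (intro emeasure_eq_ennreal_measure) auto
    then show ?thesis
      using 2 UNIV by simp
  qed
qed

lemma dil_two_power_dil_two_power:
  "Q \<in> Qcubes mu \<Longrightarrow> dil (2 ^ i) (dil (2 ^ j) Q) = dil (2 ^ (i + j)) Q"
  by (erule Qcubes_cases) (simp_all add: power_add mult.assoc)

lemma Qcubes_emeasure:
  assumes "Q \<in> Qcubes mu"
  shows "emeasure mu Q = ennreal (measure mu Q)" "0 < measure mu Q"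
  using assms by (cases rule: Qcubes_cases; simp add: emeasure_cube)+

lemma Qcubes_sets: "Q \<in> Qcubes mu \<Longrightarrow> Q \<in> sets mu"
  by (erule Qcubes_cases) auto

lemma measure_Qcubes_mono:
  assumes "A \<in> Qcubes mu" "B \<in> Qcubes mu" "A \<subseteq> B"
  shows "measure mu A \<le> measure mu B"
  using assms Qcubes_emeasure(1)[OF assms(2)]
  by (intro measure_mono_fmeasurable Qcubes_sets fmeasurableI) auto

lemma dil_two_Qcubes:
  assumes "Q \<in> Qcubes mu"
  shows "dil 2 Q \<in> Qcubes mu" "Q \<subseteq> dil 2 Q"
proof -
  have "dil 2 Q \<in> Qcubes mu \<and> Q \<subseteq> dil 2 Q"
    using assms
  proof (cases rule: Qcubes_cases)
    case (cube z l)
    then show ?thesis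
      using measure_cube_mono[of l "2 * l" z] cube_mono[of l "2 * l" z] by (auto simp: Qcubes_cube_iff)
  qed (use assms in simp)
  then show "dil 2 Q \<in> Qcubes mu" "Q \<subseteq> dil 2 Q"
    by simp_all
qed

lemma doubling_UNIV:
  assumes "UNIV \<in> Qcubes mu"
  shows "doubling mu UNIV"
proof -
  have "(1::ennreal) \<le> 2 ^ (DIM('a) + 1)"
    by (rule one_le_power) simp
  then show ?thesis
    using assms mult_right_mono[of 1 "2 ^ (DIM('a) + 1)" "emeasure mu UNIV"] by (simp add: doubling_def)
qed

lemma doubling_Qcubes: "doubling mu Q \<Longrightarrow> Q \<in> Qcubes mu"
  by (simp add: doubling_def)

lemma measure_dil_two_le:
  assumes "doubling mu Q"
  shows "measure mu (dil 2 Q) \<le> 2 ^ (DIM('a) + 1) * measure mu Q"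
proof -
  have "ennreal (measure mu (dil 2 Q)) \<le> 2 ^ (DIM('a) + 1) * ennreal (measure mu Q)"
    using assms Qcubes_emeasure(1) dil_two_Qcubes(1)[OF doubling_Qcubes[OF assms]]
    by (auto simp: doubling_def)
  then show ?thesis
    by (simp add: ennreal_two_power ennreal_le_iff del: ennreal_numeral power_Suc flip: ennreal_mult)
qed

lemma star_doubling:
  assumes "Q \<in> Qcubes mu"
  shows "doubling mu (star mu Q)" "Q \<subseteq> star mu Q"
proof -
  have "doubling mu (star mu Q) \<and> Q \<subseteq> star mu Q"
    using assms
  proof (cases rule: Qcubes_cases)
    case UNIV
    then show ?thesis
      using assms doubling_UNIV by (simp add: star_def)
  next
    case (cube z l)
    have "\<exists>j. doubling mu (dil (2 ^ j) Q)"
      using ex_doubling_dilate[OF cube(1,3)] cube by simp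
    then have "doubling mu (star mu Q)"
      unfolding star_def by (rule LeastI_ex)
    then show ?thesis
      using cube by (simp add: star_def cube_mono one_le_power)
  qed
  then show "doubling mu (star mu Q)" "Q \<subseteq> star mu Q"
    by simp_all
qed

lemma delta_le_dyadic_sum:
  assumes l: "0 < l" and c: "\<And>i. 0 \<le> c i"
    and hc: "\<And>i t. 2 ^ i * l \<le> t \<Longrightarrow> t < 2 ^ Suc i * l \<Longrightarrow> \<not> R \<subseteq> cube z t \<Longrightarrow> measure mu (cube z t) \<le> c i"
  shows "delta mu n (cube z l) R \<le> (\<Sum>i. ennreal (c i * (2 ^ i * l) powr (- n)))"
proof -
  define b where "b i = c i * (2 ^ i * l) powr (- n) / (2 ^ i * l)" for i
  let ?I = "\<lambda>i. {2 ^ i * l..<2 ^ Suc i * l}"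
  have "delta mu n (cube z l) R = (\<integral>\<^sup>+ t. indicator {t. l \<le> t \<and> \<not> R \<subseteq> cube z t} t *
        emeasure mu (cube z t) * ennreal (t powr (- n) / t) \<partial>lborel)"
    using l by (simp add: delta_def)
  also have "\<dots> \<le> (\<integral>\<^sup>+ t. (\<Sum>i. ennreal (b i) * indicator (?I i) t) \<partial>lborel)"
  proof (intro nn_integral_mono)
    fix t
    show "indicator {t. l \<le> t \<and> \<not> R \<subseteq> cube z t} t * emeasure mu (cube z t) * ennreal (t powr (- n) / t)
       \<le> (\<Sum>i. ennreal (b i) * indicator (?I i) t)"
    proof (cases "l \<le> t \<and> \<not> R \<subseteq> cube z t")
      case True
      then obtain i where i: "2 ^ i * l \<le> t" "t < 2 ^ Suc i * l"
        using dyadic_index[OF l] by blast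
      have t: "0 < t"
        using True l by simp
      have "measure mu (cube z t) * (t powr (- n) / t) \<le> c i * ((2 ^ i * l) powr (- n) / (2 ^ i * l))"
        using hc[OF i] True c[of i] powr_neg_div_antimono[OF _ i(1), of n] l n_pos t
        by (intro mult_mono) auto
      then have "emeasure mu (cube z t) * ennreal (t powr (- n) / t) \<le> ennreal (b i)"
        using t by (simp add: emeasure_cube b_def ennreal_leI flip: ennreal_mult)
      also have "\<dots> = ennreal (b i) * indicator (?I i) t"
        using i by simp
      also have "\<dots> \<le> (\<Sum>i. ennreal (b i) * indicator (?I i) t)"
        using sum_le_suminf[OF summableI, of "{i}"] by simp
      finally show ?thesis
        using True by simp
    qed simp
  qed
  also have "\<dots> = (\<Sum>i. \<integral>\<^sup>+ t. ennreal (b i) * indicator (?I i) t \<partial>lborel)"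
    by (rule nn_integral_suminf) auto
  also have "\<dots> = (\<Sum>i. ennreal (c i * (2 ^ i * l) powr (- n)))"
    using l c by (intro suminf_cong) (simp add: nn_integral_cmult_indicator b_def flip: ennreal_mult)
  finally show ?thesis .
qed

definition Kconst :: real where
  "Kconst = 1 + 2 * C0 * 2 powr n / (1 - 2 powr (- n)) + 2 * C0 * 4 powr n"

lemma two_powr_neg_n: "0 < 2 powr (- n)" "2 powr (- n) < (1::real)"
  using n_pos by (auto intro: powr_less_one)

lemma Kcoef_le_Kconst:
  assumes "delta mu n Q R \<le> ennreal (2 * C0 * 2 powr n / (1 - 2 powr (- n)) + 2 * C0 * 4 powr n)"
  shows "Kcoef mu n Q R \<le> ennreal Kconst"
proof -
  have "0 \<le> 2 * C0 * 2 powr n / (1 - 2 powr (- n)) + 2 * C0 * 4 powr n"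
    using C0_pos two_powr_neg_n by simp
  then have "ennreal Kconst = 1 + ennreal (2 * C0 * 2 powr n / (1 - 2 powr (- n)) + 2 * C0 * 4 powr n)"
    unfolding Kconst_def by (subst add.assoc, subst ennreal_plus) auto
  then show ?thesis
    using assms unfolding Kcoef_def by (simp add: add_left_mono)
qed

lemma Kconst_ge_1: "1 \<le> Kconst"
  using C0_pos two_powr_neg_n by (simp add: Kconst_def)

lemma Kcoef_cube_UNIV_le:
  assumes l: "0 < l" and bound: "\<And>t. measure mu (cube z t) \<le> 2 * measure mu (cube z l)"
  shows "Kcoef mu n (cube z l) UNIV \<le> ennreal Kconst"
proof (rule Kcoef_le_Kconst)
  define r :: real where "r = 2 powr (- n)"
  define B where "B = 2 * measure mu (cube z l) * l powr (- n)"
  have r: "0 < r" "r < 1"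
    using two_powr_neg_n by (auto simp: r_def)
  have B: "0 \<le> B"
    by (simp add: B_def)
  have "delta mu n (cube z l) UNIV \<le> (\<Sum>i. ennreal (2 * measure mu (cube z l) * (2 ^ i * l) powr (- n)))"
    by (rule delta_le_dyadic_sum[OF l]) (use bound in auto)
  also have "(\<lambda>i. 2 * measure mu (cube z l) * (2 ^ i * l) powr (- n)) = (\<lambda>i. B * r ^ i)"
    using l by (auto simp: B_def r_def powr_mult two_power_powr)
  also have "(\<Sum>i. ennreal (B * r ^ i)) = ennreal (\<Sum>i. B * r ^ i)"
    using r B by (intro suminf_ennreal2 summable_mult summable_geometric) auto
  also have "(\<Sum>i. B * r ^ i) = B * (1 / (1 - r))"
    using r by (subst suminf_mult) (auto intro: summable_geometric simp: suminf_geometric)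
  also have "\<dots> \<le> ennreal (2 * C0 * 2 powr n / (1 - r))"
    using measure_cube_powr_le[OF l, of z] r by (intro ennreal_leI) (auto simp: B_def divide_right_mono)
  also have "\<dots> \<le> ennreal (2 * C0 * 2 powr n / (1 - 2 powr (- n)) + 2 * C0 * 4 powr n)"
    using C0_pos by (intro ennreal_leI) (simp add: r_def)
  finally show "delta mu n (cube z l) UNIV \<le> \<dots>" .
qed

lemma delta_cube_dilate_le_sum:
  assumes l: "0 < l" and c: "\<And>i. i < j \<Longrightarrow> measure mu (cube z (2 ^ Suc i * l)) \<le> c i"
  shows "delta mu n (cube z l) (cube z (2 ^ j * l)) \<le> ennreal (\<Sum>i<j. c i * (2 ^ i * l) powr (- n))"
proof -
  define c' where "c' i = (if i < j then c i else 0)" for i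
  have c_nonneg: "0 \<le> c i" if "i < j" for i
    using order.trans[OF measure_nonneg c[OF that]] .
  then have c'_nonneg: "0 \<le> c' i" for i
    by (simp add: c'_def)
  have "delta mu n (cube z l) (cube z (2 ^ j * l)) \<le> (\<Sum>i. ennreal (c' i * (2 ^ i * l) powr (- n)))"
  proof (rule delta_le_dyadic_sum[OF l c'_nonneg])
    fix i t assume t: "2 ^ i * l \<le> t" "t < 2 ^ Suc i * l" "\<not> cube z (2 ^ j * l) \<subseteq> cube z t"
    have "i < j"
    proof (rule ccontr)
      assume "\<not> i < j"
      then have "2 ^ j * l \<le> t"
        using t(1) l by (smt (verit) mult_right_mono power_increasing not_less one_le_numeral)
      then show False
        using t(3) cube_mono by blast
    qed
    then show "measure mu (cube z t) \<le> c' i"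
      using c[of i] measure_cube_mono[of t "2 ^ Suc i * l" z] t by (simp add: c'_def)
  qed
  also have "\<dots> = (\<Sum>i<j. ennreal (c i * (2 ^ i * l) powr (- n)))"
    by (subst suminf_finite[of "{..<j}"]) (auto simp: c'_def)
  also have "\<dots> = ennreal (\<Sum>i<j. c i * (2 ^ i * l) powr (- n))"
    using c_nonneg by (intro sum_ennreal mult_nonneg_nonneg) auto
  finally show ?thesis .
qed

text \<open>The hypothesis covers the two kinds of dyadic shells: below the first dilate carrying mass
  \<open>2\<mu>(S)\<close> the mass is at most \<open>2\<mu>(S)\<close>; above it the dilates are not doubling, so their masses
  decay geometrically downwards from \<open>2^j S\<close>.\<close>
lemma Kcoef_cube_dilate_le:
  assumes l: "0 < l"
    and bound: "\<And>i. i < j \<Longrightarrow> measure mu (cube z (2 ^ Suc i * l))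
      \<le> 2 * measure mu (cube z l) + measure mu (cube z (2 ^ j * l)) * (1 / 2 ^ (DIM('a) + 1)) ^ (j - Suc i)"
  shows "Kcoef mu n (cube z l) (cube z (2 ^ j * l)) \<le> ennreal Kconst"
proof (rule Kcoef_le_Kconst)
  define r :: real where "r = 2 powr (- n)"
  define c where "c i = 2 * measure mu (cube z l)
    + measure mu (cube z (2 ^ j * l)) * (1 / 2 ^ (DIM('a) + 1)) ^ (j - Suc i)" for i
  have r: "0 < r" "r < 1"
    using two_powr_neg_n by (auto simp: r_def)
  have "delta mu n (cube z l) (cube z (2 ^ j * l)) \<le> ennreal (\<Sum>i<j. c i * (2 ^ i * l) powr (- n))"
    using delta_cube_dilate_le_sum[OF l, of j z c] bound by (simp add: c_def)
  also have "\<dots> \<le> ennreal (\<Sum>i<j. 2 * C0 * 2 powr n * r ^ i + C0 * 4 powr n * (1/2) ^ (j - Suc i))"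
  proof (intro ennreal_leI sum_mono)
    fix i assume "i \<in> {..<j}"
    moreover have "2 * measure mu (cube z l) * (2 ^ i * l) powr (- n) \<le> 2 * C0 * 2 powr n * r ^ i"
      using measure_cube_powr_le[OF l, of z] l r
      by (simp add: powr_mult two_power_powr r_def mult_ac mult_right_mono)
    moreover have "measure mu (cube z (2 ^ j * l)) * (1 / 2 ^ (DIM('a) + 1)) ^ (j - Suc i) * (2 ^ i * l) powr (- n)
        \<le> C0 * 4 powr n * (1/2) ^ (j - Suc i)"
      using measure_cube_le_growth[of "2 ^ j * l" z] dilate_decay_le[OF l _ n_pos n_le_DIM, where C=C0 and i=i and j=j]
        \<open>i \<in> {..<j}\<close> l C0_pos by (auto intro: order.trans[OF mult_right_mono[OF mult_right_mono]])
    ultimately show "c i * (2 ^ i * l) powr (- n) \<le> 2 * C0 * 2 powr n * r ^ i + C0 * 4 powr n * (1/2) ^ (j - Suc i)"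
      by (simp add: c_def distrib_right)
  qed
  also have "\<dots> \<le> ennreal (2 * C0 * 2 powr n * (1 / (1 - r)) + C0 * 4 powr n * (1 / (1 - 1/2)))"
  proof (intro ennreal_leI)
    have "(\<Sum>i<j. (1/2::real) ^ (j - Suc i)) = (\<Sum>i<j. (1/2) ^ i)"
      by (rule sum.nat_diff_reindex)
    then have "(\<Sum>i<j. 2 * C0 * 2 powr n * r ^ i + C0 * 4 powr n * (1/2) ^ (j - Suc i))
      = 2 * C0 * 2 powr n * (\<Sum>i<j. r ^ i) + C0 * 4 powr n * (\<Sum>i<j. (1/2) ^ i)"
      by (simp only: sum.distrib flip: sum_distrib_left)
    also have "\<dots> \<le> 2 * C0 * 2 powr n * (1 / (1 - r)) + C0 * 4 powr n * (1 / (1 - 1/2))"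
      using r C0_pos by (intro add_mono mult_left_mono geometric_sum_le) auto
    finally show "(\<Sum>i<j. 2 * C0 * 2 powr n * r ^ i + C0 * 4 powr n * (1/2) ^ (j - Suc i))
      \<le> 2 * C0 * 2 powr n * (1 / (1 - r)) + C0 * 4 powr n * (1 / (1 - 1/2))" .
  qed
  finally show "delta mu n (cube z l) (cube z (2 ^ j * l))
    \<le> ennreal (2 * C0 * 2 powr n / (1 - 2 powr (- n)) + 2 * C0 * 4 powr n)"
    by (simp add: r_def mult_ac)
qed

lemma emeasure_UNIV_le_cube_bound:
  assumes "\<And>t. measure mu (cube z t) \<le> B"
  shows "emeasure mu UNIV \<le> ennreal B"
proof -
  have "range (\<lambda>k. cube z (real k)) \<subseteq> sets mu" "incseq (\<lambda>k. cube z (real k))"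
    by (auto intro!: incseq_SucI cube_mono)
  from SUP_emeasure_incseq[OF this] have "emeasure mu UNIV = (SUP k. emeasure mu (cube z (real k)))"
    by (simp add: UN_cube_of_nat_eq_UNIV)
  also have "\<dots> \<le> ennreal B"
    using assms by (intro SUP_least) (simp add: emeasure_cube ennreal_leI)
  finally show ?thesis .
qed

definition admissible_successor :: "'a set \<Rightarrow> 'a set \<Rightarrow> bool" where
  "admissible_successor S T \<longleftrightarrow> doubling mu T \<and> S \<subseteq> T \<and> Kcoef mu n S T \<le> ennreal Kconst \<and>
     (T \<noteq> UNIV \<longrightarrow> (\<exists>j::nat. T = dil (2 ^ j) S) \<and> 2 * measure mu S \<le> measure mu T)"

lemma admissible_successor_UNIV:
  assumes l: "0 < l" and pos: "0 < measure mu (cube z l)"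
    and small: "\<And>k. measure mu (cube z (2 ^ k * l)) < 2 * measure mu (cube z l)"
  shows "admissible_successor (cube z l) UNIV"
proof -
  have bound: "measure mu (cube z t) \<le> 2 * measure mu (cube z l)" for t
  proof -
    obtain k :: nat where "t / l < 2 ^ k"
      using real_arch_pow[of 2] by auto
    then have "measure mu (cube z t) \<le> measure mu (cube z (2 ^ k * l))"
      using l by (intro measure_cube_mono) (simp add: divide_less_eq)
    then show ?thesis
      using small[of k] by linarith
  qed
  have "emeasure mu (cube z l) \<le> emeasure mu UNIV"
    by (intro emeasure_mono) auto
  then have "0 < emeasure mu UNIV"
    using pos by (metis emeasure_cube ennreal_less_zero_iff order_less_le_trans)
  moreover have "emeasure mu UNIV < \<infinity>"
    using emeasure_UNIV_le_cube_bound[OF bound] by (simp add: le_less_trans)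
  ultimately have "doubling mu UNIV"
    by (intro doubling_UNIV) (simp add: Qcubes_def)
  then show ?thesis
    using Kcoef_cube_UNIV_le[OF l bound] by (simp add: admissible_successor_def)
qed

lemma admissible_successor_dilate:
  assumes l: "0 < l" and pos: "0 < measure mu (cube z l)"
    and large: "2 * measure mu (cube z l) \<le> measure mu (cube z (2 ^ i * l))"
  shows "\<exists>j. admissible_successor (cube z l) (cube z (2 ^ j * l))"
proof -
  let ?m = "\<lambda>k. measure mu (cube z (2 ^ k * l))"
  define i0 where "i0 = (LEAST i. 2 * measure mu (cube z l) \<le> ?m i)"
  have i0: "2 * measure mu (cube z l) \<le> ?m i0" and below: "\<And>i. i < i0 \<Longrightarrow> ?m i < 2 * measure mu (cube z l)"
    using LeastI[of "\<lambda>i. 2 * measure mu (cube z l) \<le> ?m i" i] not_less_Least[of _ "\<lambda>i. 2 * measure mu (cube z l) \<le> ?m i"] large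
    by (auto simp: i0_def not_le)
  have mono: "?m i \<le> ?m k" if "i \<le> k" for i k
    using l that by (intro measure_cube_mono mult_right_mono power_increasing) auto
  obtain k where "doubling mu (cube z (2 ^ k * (2 ^ i0 * l)))"
    using ex_doubling_dilate[of "2 ^ i0 * l" z] l pos mono[of 0 i0] i0 by auto
  then have ex: "\<exists>j. i0 \<le> j \<and> doubling mu (cube z (2 ^ j * l))"
    by (intro exI[of _ "k + i0"]) (simp add: power_add mult.assoc)
  define j where "j = (LEAST j. i0 \<le> j \<and> doubling mu (cube z (2 ^ j * l)))"
  have j: "i0 \<le> j" "doubling mu (cube z (2 ^ j * l))"
    using LeastI_ex[OF ex] by (auto simp: j_def)
  have nondbl: "\<not> doubling mu (cube z (2 ^ k * l))" if "i0 \<le> k" "k < j" for k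
    using not_less_Least[of k "\<lambda>j. i0 \<le> j \<and> doubling mu (cube z (2 ^ j * l))"] that by (auto simp: j_def)
  have "?m (Suc i) \<le> 2 * measure mu (cube z l) + ?m j * (1 / 2 ^ (DIM('a) + 1)) ^ (j - Suc i)" if "i < j" for i
  proof (cases "Suc i < i0")
    case True
    have "0 \<le> ?m j * (1 / 2 ^ (DIM('a) + 1)) ^ (j - Suc i)"
      by simp
    then show ?thesis
      using below[OF True] by linarith
  next
    case False
    have "0 < ?m (Suc i)"
      using pos mono[of 0 "Suc i"] by simp
    then have "?m (Suc i) \<le> ?m j * (1 / 2 ^ (DIM('a) + 1)) ^ (j - Suc i)"
      using measure_nondoubling_dilates_decay[OF l, of z "Suc i" "j - Suc i"] nondbl False that by simp
    then show ?thesis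
      using measure_nonneg[of mu "cube z l"] by linarith
  qed
  then have "Kcoef mu n (cube z l) (cube z (2 ^ j * l)) \<le> ennreal Kconst"
    using Kcoef_cube_dilate_le[OF l] by simp
  moreover have "cube z l \<subseteq> cube z (2 ^ j * l)"
    using l by (simp add: cube_mono one_le_power)
  moreover have "2 * measure mu (cube z l) \<le> ?m j"
    using i0 mono[OF j(1)] by simp
  ultimately show ?thesis
    using j(2) l by (auto simp: admissible_successor_def)
qed

text \<open>Either some dilate of \<open>S\<close> carries twice the mass of \<open>S\<close>, and then the first doubling
  dilate beyond it will do; or none does, and then \<open>\<mu>\<close> is finite and \<open>\<real>\<^sup>d\<close> itself will do.\<close>
lemma ex_admissible_successor:
  assumes S: "doubling mu S" "S \<noteq> UNIV"
  shows "\<exists>T. admissible_successor S T"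
proof -
  from doubling_Qcubes[OF S(1)] S(2) obtain z l where C: "0 < l" "S = cube z l" "0 < measure mu (cube z l)"
    by (cases rule: Qcubes_cases) auto
  show ?thesis
  proof (cases "\<exists>i. 2 * measure mu (cube z l) \<le> measure mu (cube z (2 ^ i * l))")
    case True
    then show ?thesis
      using admissible_successor_dilate[OF C(1,3)] C(2) by blast
  next
    case False
    then show ?thesis
      using admissible_successor_UNIV[OF C(1,3)] C(2) by (auto simp: not_le)
  qed
qed

definition next_cube :: "'a set \<Rightarrow> 'a set" where
  "next_cube T = (if T = UNIV then UNIV else SOME T'. admissible_successor T T')"

lemma next_cube_admissible: "doubling mu T \<Longrightarrow> T \<noteq> UNIV \<Longrightarrow> admissible_successor T (next_cube T)"
  unfolding next_cube_def using someI_ex[OF ex_admissible_successor] by simp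

definition cube_chain :: "'a set \<Rightarrow> nat \<Rightarrow> 'a set" where
  "cube_chain S k = (next_cube ^^ k) S"

lemma cube_chain_0 [simp]: "cube_chain S 0 = S"
  and cube_chain_Suc: "cube_chain S (Suc k) = next_cube (cube_chain S k)"
  by (simp_all add: cube_chain_def)

lemma cube_chain_doubling:
  assumes S: "doubling mu S"
  shows "doubling mu (cube_chain S k) \<and> S \<subseteq> cube_chain S k"
proof (induction k)
  case (Suc k)
  show ?case
  proof (cases "cube_chain S k = UNIV")
    case True
    then show ?thesis
      using Suc by (simp add: cube_chain_Suc next_cube_def)
  next
    case False
    then show ?thesis
      using next_cube_admissible[of "cube_chain S k"] Suc
      by (auto simp: cube_chain_Suc admissible_successor_def)
  qed
qed (use S in simp)

lemma cube_chain_dilate: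
  assumes S: "doubling mu S" and ne: "cube_chain S k \<noteq> UNIV"
  shows "(\<exists>j::nat. cube_chain S k = dil (2 ^ j) S) \<and> 2 ^ k * measure mu S \<le> measure mu (cube_chain S k)"
  using ne
proof (induction k)
  case 0
  have "S = dil (2 ^ 0) S"
    using doubling_Qcubes[OF S] by (cases rule: Qcubes_cases) simp_all
  then show ?case
    by (metis cube_chain_0 mult_1 order_refl power_0)
next
  case (Suc k)
  let ?R = "cube_chain S k"
  have "?R \<noteq> UNIV"
    using Suc.prems by (auto simp: cube_chain_Suc next_cube_def)
  then obtain j :: nat where j: "?R = dil (2 ^ j) S" and mR: "2 ^ k * measure mu S \<le> measure mu ?R"
    using Suc.IH by blast
  have "admissible_successor ?R (cube_chain S (Suc k))"
    using next_cube_admissible[of ?R] cube_chain_doubling[OF S] \<open>?R \<noteq> UNIV\<close> by (simp add: cube_chain_Suc)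
  then have "\<exists>i::nat. cube_chain S (Suc k) = dil (2 ^ i) ?R"
    and mT: "2 * measure mu ?R \<le> measure mu (cube_chain S (Suc k))"
    using Suc.prems by (simp_all add: admissible_successor_def)
  then obtain i :: nat where i: "cube_chain S (Suc k) = dil (2 ^ i) ?R"
    by blast
  have "cube_chain S (Suc k) = dil (2 ^ (i + j)) S"
    unfolding i j dil_two_power_dil_two_power[OF doubling_Qcubes[OF S]] ..
  moreover have "2 ^ Suc k * measure mu S \<le> measure mu (cube_chain S (Suc k))"
    using mR mT by simp
  ultimately show ?case
    by blast
qed

lemma cube_chain_mean_step_le:
  assumes p: "1 \<le> p" and N: "normC mu n p q f \<le> ennreal N" "0 \<le> N" and S: "doubling mu S"
  shows "\<bar>mean mu (cube_chain S k) f - mean mu (cube_chain S (Suc k)) f\<bar>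
    \<le> Kconst * N / measure mu S powr (1/p) * (2 powr (- (1/p))) ^ k"
proof (cases "cube_chain S k = UNIV")
  case True
  then show ?thesis
    using Kconst_ge_1 N by (simp add: cube_chain_Suc next_cube_def)
next
  case False
  let ?R = "cube_chain S k"
  have mS: "0 < measure mu S"
    using Qcubes_emeasure(2)[OF doubling_Qcubes[OF S]] .
  have R: "doubling mu ?R" and mR: "2 ^ k * measure mu S \<le> measure mu ?R"
    using cube_chain_doubling[OF S, of k] cube_chain_dilate[OF S False] by auto
  then have T: "admissible_successor ?R (cube_chain S (Suc k))"
    using next_cube_admissible[of ?R] False by (simp add: cube_chain_Suc)
  have "(2 ^ k * measure mu S) powr (1/p) * \<bar>mean mu ?R f - mean mu (cube_chain S (Suc k)) f\<bar>
      \<le> measure mu ?R powr (1/p) * \<bar>mean mu ?R f - mean mu (cube_chain S (Suc k)) f\<bar>"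
    using mR mS p by (intro mult_right_mono powr_mono2) auto
  also have "\<dots> \<le> Kconst * N"
    using T Kconst_ge_1 N R by (intro mean_diff_le_normC) (auto simp: admissible_successor_def)
  finally have "\<bar>mean mu ?R f - mean mu (cube_chain S (Suc k)) f\<bar> \<le> Kconst * N / (2 ^ k * measure mu S) powr (1/p)"
    using mS by (simp add: field_simps)
  also have "\<dots> = Kconst * N / measure mu S powr (1/p) * (2 powr (- (1/p))) ^ k"
    using mS by (simp add: powr_mult two_power_powr powr_minus_divide power_one_over)
  finally show ?thesis .
qed

lemma cube_chain_eq_UNIV_if_subset:
  assumes S: "doubling mu S" and A: "A \<in> fmeasurable mu" "cube_chain S k \<subseteq> A"
    and less: "measure mu A < 2 ^ k * measure mu S"
  shows "cube_chain S k = UNIV"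
proof (rule ccontr)
  assume "cube_chain S k \<noteq> UNIV"
  then have "2 ^ k * measure mu S \<le> measure mu (cube_chain S k)"
    using cube_chain_dilate[OF S] by blast
  also have "\<dots> \<le> measure mu A"
    using A cube_chain_doubling[OF S, of k] doubling_Qcubes Qcubes_sets
    by (intro measure_mono_fmeasurable) auto
  finally show False
    using less by simp
qed

lemma ex_cube_chain_superset_cube:
  assumes S: "doubling mu S" and zl: "0 < l" "S = cube z l"
  shows "\<exists>k. cube z M \<subseteq> cube_chain S k"
proof -
  obtain k :: nat where "measure mu (cube z M) / measure mu S < 2 ^ k"
    using real_arch_pow[of 2] by auto
  then have k: "measure mu (cube z M) < 2 ^ k * measure mu S"
    using Qcubes_emeasure(2)[OF doubling_Qcubes[OF S]] by (simp add: divide_less_eq)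
  show ?thesis
  proof (cases "cube_chain S k = UNIV")
    case False
    with cube_chain_dilate[OF S] obtain j :: nat where "cube_chain S k = dil (2 ^ j) S"
      by blast
    then have j: "cube_chain S k = cube z (2 ^ j * l)"
      using zl by simp
    have "M \<le> 2 ^ j * l"
    proof (rule ccontr)
      assume "\<not> M \<le> 2 ^ j * l"
      then have "cube_chain S k \<subseteq> cube z M"
        using j cube_mono[of "2 ^ j * l" M z] by simp
      then show False
        using cube_chain_eq_UNIV_if_subset[OF S cube_fmeasurable _ k] False by simp
    qed
    then show ?thesis
      using j cube_mono by blast
  next
    case True
    then show ?thesis
      by blast
  qed
qed

lemma ex_cube_chain_superset:
  assumes S: "doubling mu S" and Q: "Q \<in> Qcubes mu"
  shows "\<exists>k. Q \<subseteq> cube_chain S k"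
proof (cases "Q = UNIV")
  case True
  obtain k :: nat where "measure mu UNIV / measure mu S < 2 ^ k"
    using real_arch_pow[of 2] by auto
  moreover have "UNIV \<in> fmeasurable mu"
    using Qcubes_emeasure(1)[OF Q] True by (intro fmeasurableI) auto
  ultimately show ?thesis
    using cube_chain_eq_UNIV_if_subset[OF S, of UNIV k] Qcubes_emeasure(2)[OF doubling_Qcubes[OF S]]
    by (auto simp: divide_less_eq)
next
  case False
  show ?thesis
  proof (cases "S = UNIV")
    case False
    obtain z l where zl: "0 < l" "S = cube z l"
      using doubling_Qcubes[OF S] False by (cases rule: Qcubes_cases) auto
    obtain w s where "Q = cube w s"
      using Q \<open>Q \<noteq> UNIV\<close> by (cases rule: Qcubes_cases) auto
    then obtain M where "Q \<subseteq> cube z M"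
      using bounded_subset_cube[OF compact_imp_bounded[OF compact_cube], of w s z] by auto
    then show ?thesis
      using ex_cube_chain_superset_cube[OF S zl, of M] by blast
  next
    case True
    then show ?thesis
      by (intro exI[of _ 0]) simp
  qed
qed

lemma doubling_mean_le_normC:
  assumes p: "1 \<le> p" and N: "normC mu n p q f \<le> ennreal N" "0 \<le> N"
    and lim: "mean_lim_zero mu f" and S: "doubling mu S"
  shows "measure mu S powr (1/p) * \<bar>mean mu S f\<bar> \<le> Kconst * N / (1 - 2 powr (- (1/p)))"
proof -
  define \<rho> :: real where "\<rho> = 2 powr (- (1/p))"
  define A where "A = Kconst * N / measure mu S powr (1/p)"
  have \<rho>: "0 < \<rho>" "\<rho> < 1"
    using p by (auto simp: \<rho>_def intro: powr_less_one)
  have mS: "0 < measure mu S"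
    using Qcubes_emeasure(2)[OF doubling_Qcubes[OF S]] .
  have A: "0 \<le> A"
    using Kconst_ge_1 N by (simp add: A_def)
  have "\<bar>mean mu S f\<bar> \<le> A / (1 - \<rho>)"
  proof (rule abs_mean_le_if_cofinal[OF lim])
    fix Q assume "Q \<in> Qdoubling mu"
    then have "Q \<in> Qcubes mu"
      by (simp add: Qdoubling_def doubling_Qcubes)
    then obtain k where "Q \<subseteq> cube_chain S k"
      using ex_cube_chain_superset[OF S] by blast
    moreover have "cube_chain S k \<in> Qdoubling mu"
      using cube_chain_doubling[OF S] by (simp add: Qdoubling_def)
    moreover have "\<bar>mean mu S f - mean mu (cube_chain S k) f\<bar> \<le> A / (1 - \<rho>)"
      using abs_diff_le_geometric_bound[of "\<lambda>k. mean mu (cube_chain S k) f" A \<rho> k]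
        cube_chain_mean_step_le[OF p N S] A \<rho> by (simp add: A_def \<rho>_def)
    ultimately show "\<exists>R\<in>Qdoubling mu. Q \<subseteq> R \<and> \<bar>mean mu S f - mean mu R f\<bar> \<le> A / (1 - \<rho>)"
      by blast
  qed
  then have "measure mu S powr (1/p) * \<bar>mean mu S f\<bar> \<le> measure mu S powr (1/p) * (A / (1 - \<rho>))"
    by (intro mult_left_mono) auto
  then show ?thesis
    using mS by (simp add: A_def \<rho>_def)
qed

lemma measure_dil_two_powr_le:
  assumes Q: "Q \<in> Qcubes mu" and q: "1 \<le> q" "q \<le> p"
  shows "measure mu (dil 2 Q) powr (1/p - 1/q) * measure mu Q powr (1/q) \<le> measure mu Q powr (1/p)"
proof -
  have "measure mu Q \<le> measure mu (dil 2 Q)" "0 < measure mu Q"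
    using measure_Qcubes_mono[OF Q dil_two_Qcubes[OF Q]] Qcubes_emeasure(2)[OF Q] by auto
  moreover have "1/p - 1/q \<le> 0"
    using q by (simp add: frac_le)
  ultimately have "measure mu (dil 2 Q) powr (1/p - 1/q) \<le> measure mu Q powr (1/p - 1/q)"
    by (intro powr_mono2') auto
  then have "measure mu (dil 2 Q) powr (1/p - 1/q) * measure mu Q powr (1/q)
      \<le> measure mu Q powr (1/p - 1/q) * measure mu Q powr (1/q)"
    by (rule mult_right_mono) simp
  also have "\<dots> = measure mu Q powr (1/p)"
    by (simp flip: powr_add)
  finally show ?thesis .
qed

lemma Morrey_summand_add_const_le:
  assumes Q: "Q \<in> Qcubes mu" and R: "R \<in> Qcubes mu" "Q \<subseteq> R" and q: "1 \<le> q" "q \<le> p"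
    and g: "g \<in> borel_measurable mu"
  shows "ennreal (measure mu (dil 2 Q) powr (1/p - 1/q)) * enn_powr (\<integral>\<^sup>+x\<in>Q. ennreal (\<bar>g x + c\<bar> powr q) \<partial>mu) (1/q)
    \<le> 2 * (ennreal (measure mu (dil 2 Q) powr (1/p - 1/q)) * enn_powr (\<integral>\<^sup>+x\<in>Q. ennreal (\<bar>g x\<bar> powr q) \<partial>mu) (1/q)
      + ennreal (measure mu R powr (1/p) * \<bar>c\<bar>))"
proof -
  let ?w = "measure mu (dil 2 Q) powr (1/p - 1/q)"
  have "?w * (\<bar>c\<bar> * measure mu Q powr (1/q)) = \<bar>c\<bar> * (?w * measure mu Q powr (1/q))"
    by (simp add: mult_ac)
  also have "\<dots> \<le> \<bar>c\<bar> * measure mu Q powr (1/p)"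
    using measure_dil_two_powr_le[OF Q q] by (rule mult_left_mono) simp
  also have "\<dots> = measure mu Q powr (1/p) * \<bar>c\<bar>"
    by (simp add: mult.commute)
  also have "\<dots> \<le> measure mu R powr (1/p) * \<bar>c\<bar>"
    using measure_Qcubes_mono[OF Q R] Qcubes_emeasure(2)[OF Q] q by (intro mult_right_mono powr_mono2) auto
  finally have c: "ennreal ?w * ennreal (\<bar>c\<bar> * measure mu Q powr (1/q)) \<le> ennreal (measure mu R powr (1/p) * \<bar>c\<bar>)"
    by (simp add: ennreal_leI flip: ennreal_mult)
  have "ennreal ?w * enn_powr (\<integral>\<^sup>+x\<in>Q. ennreal (\<bar>g x + c\<bar> powr q) \<partial>mu) (1/q)
      \<le> ennreal ?w * (2 * (enn_powr (\<integral>\<^sup>+x\<in>Q. ennreal (\<bar>g x\<bar> powr q) \<partial>mu) (1/q)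
        + ennreal (\<bar>c\<bar> * measure mu Q powr (1/q))))"
    using Lq_norm_add_const_le[OF Qcubes_sets[OF Q] Qcubes_emeasure(1)[OF Q] _ q(1) g, of c] by (intro mult_left_mono) auto
  also have "\<dots> = 2 * (ennreal ?w * enn_powr (\<integral>\<^sup>+x\<in>Q. ennreal (\<bar>g x\<bar> powr q) \<partial>mu) (1/q)
      + ennreal ?w * ennreal (\<bar>c\<bar> * measure mu Q powr (1/q)))"
    by (simp only: distrib_left mult.left_commute)
  also have "\<dots> \<le> 2 * (ennreal ?w * enn_powr (\<integral>\<^sup>+x\<in>Q. ennreal (\<bar>g x\<bar> powr q) \<partial>mu) (1/q)
      + ennreal (measure mu R powr (1/p) * \<bar>c\<bar>))"
    using c by (intro mult_left_mono add_left_mono) auto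
  finally show ?thesis .
qed

lemma doubling_mean_le_normM:
  assumes S: "doubling mu S" and q: "1 \<le> q" "q \<le> p" and f: "f \<in> borel_measurable mu"
  shows "ennreal (measure mu S powr (1/p) * \<bar>mean mu S f\<bar>)
    \<le> ennreal ((2 ^ (DIM('a) + 1)) powr (1/q - 1/p)) * normM mu p q f"
proof -
  define a where "a = 1/p - 1/q"
  define b :: real where "b = 2 ^ (DIM('a) + 1)"
  have SQ: "S \<in> Qcubes mu"
    using doubling_Qcubes[OF S] .
  have mS: "0 < measure mu S"
    using Qcubes_emeasure(2)[OF SQ] .
  have a: "a \<le> 0"
    using q by (simp add: a_def frac_le)
  have m2S: "0 < measure mu (dil 2 S)"
    using Qcubes_emeasure(2)[OF dil_two_Qcubes(1)[OF SQ]] .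
  have "(b * measure mu S) powr a \<le> measure mu (dil 2 S) powr a"
    using measure_dil_two_le[OF S] mS m2S a by (intro powr_mono2') (auto simp: b_def)
  then have "measure mu S powr a \<le> b powr (- a) * measure mu (dil 2 S) powr a"
    using mS by (simp add: b_def powr_mult powr_minus divide_simps mult.commute)
  moreover have "ennreal (\<bar>mean mu S f\<bar> * measure mu S powr (1/q))
      \<le> enn_powr (\<integral>\<^sup>+x\<in>S. ennreal (\<bar>f x\<bar> powr q) \<partial>mu) (1/q)"
    using abs_mean_le_Lq_norm[OF Qcubes_sets[OF SQ] Qcubes_emeasure(1)[OF SQ] mS q(1) f] .
  moreover have "measure mu S powr (1/p) * \<bar>mean mu S f\<bar> = measure mu S powr a * (\<bar>mean mu S f\<bar> * measure mu S powr (1/q))"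
    using mS by (simp add: a_def mult.left_commute flip: powr_add)
  then have "ennreal (measure mu S powr (1/p) * \<bar>mean mu S f\<bar>)
      = ennreal (measure mu S powr a) * ennreal (\<bar>mean mu S f\<bar> * measure mu S powr (1/q))"
    by (subst ennreal_mult'[symmetric]) simp_all
  ultimately have "ennreal (measure mu S powr (1/p) * \<bar>mean mu S f\<bar>)
      \<le> ennreal (b powr (- a) * measure mu (dil 2 S) powr a)
        * enn_powr (\<integral>\<^sup>+x\<in>S. ennreal (\<bar>f x\<bar> powr q) \<partial>mu) (1/q)"
    by (auto intro: mult_mono ennreal_leI)
  also have "\<dots> = ennreal (b powr (- a)) * (ennreal (measure mu (dil 2 S) powr a)
      * enn_powr (\<integral>\<^sup>+x\<in>S. ennreal (\<bar>f x\<bar> powr q) \<partial>mu) (1/q))"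
    by (simp add: ennreal_mult mult.assoc)
  also have "\<dots> \<le> ennreal (b powr (- a)) * normM mu p q f"
    unfolding a_def by (intro mult_left_mono normM_summand_le[OF SQ]) auto
  finally show ?thesis
    by (simp add: a_def b_def)
qed

lemma normM_le_normC:
  assumes q: "1 \<le> q" "q \<le> p" and f: "f \<in> borel_measurable mu"
    and fin: "normC mu n p q f < \<infinity>" and lim: "mean_lim_zero mu f"
  shows "normM mu p q f \<le> ennreal (2 + 2 * Kconst / (1 - 2 powr (- (1/p)))) * normC mu n p q f"
proof -
  define B where "B = Kconst / (1 - 2 powr (- (1/p)))"
  have "2 powr (- (1/p)) < (1::real)"
    using q by (intro powr_less_one) auto
  then have B: "0 \<le> B"
    using Kconst_ge_1 by (simp add: B_def)
  obtain N where N: "normC mu n p q f = ennreal N" "0 \<le> N"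
    using fin by (cases "normC mu n p q f" rule: ennreal_cases) auto
  have "normM mu p q f \<le> 2 * (ennreal N + ennreal (B * N))"
    unfolding normM_def
  proof (rule SUP_least)
    fix Q assume Q: "Q \<in> Qcubes mu"
    let ?w = "measure mu (dil 2 Q) powr (1/p - 1/q)" and ?m = "mean mu (star mu Q) f"
    have "ennreal ?w * enn_powr (\<integral>\<^sup>+x\<in>Q. ennreal (\<bar>f x\<bar> powr q) \<partial>mu) (1/q)
      \<le> 2 * (ennreal ?w * enn_powr (\<integral>\<^sup>+x\<in>Q. ennreal (\<bar>f x - ?m\<bar> powr q) \<partial>mu) (1/q)
        + ennreal (measure mu (star mu Q) powr (1/p) * \<bar>?m\<bar>))"
      using Morrey_summand_add_const_le[OF Q doubling_Qcubes[OF star_doubling(1)[OF Q]]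
          star_doubling(2)[OF Q] q, of "\<lambda>x. f x - ?m" ?m] f by simp
    also have "\<dots> \<le> 2 * (ennreal N + ennreal (B * N))"
      using normC_oscillation_summand_le[OF Q, of p q f n] N q
        doubling_mean_le_normC[OF _ N(1)[THEN eq_refl] N(2) lim star_doubling(1)[OF Q]]
      by (intro mult_left_mono add_mono ennreal_leI) (auto simp: B_def)
    finally show "ennreal ?w * enn_powr (\<integral>\<^sup>+x\<in>Q. ennreal (\<bar>f x\<bar> powr q) \<partial>mu) (1/q)
      \<le> 2 * (ennreal N + ennreal (B * N))" .
  qed
  also have "\<dots> = ennreal 2 * ennreal (N + B * N)"
    using N B by simp
  also have "\<dots> = ennreal (2 + 2 * B) * normC mu n p q f"
    using N B by (simp add: algebra_simps del: ennreal_numeral flip: ennreal_mult)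
  finally show ?thesis
    by (simp add: B_def)
qed

lemma doubling_mean_diff_le:
  assumes Q: "doubling mu Q" and R: "doubling mu R" and QR: "Q \<subseteq> R" and p: "0 < p"
    and mean: "\<And>S. doubling mu S \<Longrightarrow> measure mu S powr (1/p) * \<bar>mean mu S f\<bar> \<le> B"
  shows "measure mu Q powr (1/p) * \<bar>mean mu Q f - mean mu R f\<bar> \<le> 2 * B"
proof -
  have QR_powr: "measure mu Q powr (1/p) \<le> measure mu R powr (1/p)"
    using measure_Qcubes_mono[OF doubling_Qcubes[OF Q] doubling_Qcubes[OF R] QR] p by (intro powr_mono2) auto
  have "measure mu Q powr (1/p) * \<bar>mean mu Q f - mean mu R f\<bar>
    \<le> measure mu Q powr (1/p) * (\<bar>mean mu Q f\<bar> + \<bar>mean mu R f\<bar>)"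
    by (intro mult_left_mono abs_triangle_ineq4) simp
  also have "\<dots> \<le> measure mu Q powr (1/p) * \<bar>mean mu Q f\<bar> + measure mu R powr (1/p) * \<bar>mean mu R f\<bar>"
    using QR_powr by (simp add: distrib_left mult_right_mono)
  also have "\<dots> \<le> 2 * B"
    using mean[OF Q] mean[OF R] by simp
  finally show ?thesis .
qed

lemma normC_le_normM:
  assumes q: "1 \<le> q" "q \<le> p" and f: "f \<in> borel_measurable mu"
  shows "normC mu n p q f \<le> ennreal (2 + 4 * (2 ^ (DIM('a) + 1)) powr (1/q - 1/p)) * normM mu p q f"
proof (cases "normM mu p q f" rule: ennreal_cases)
  case (real M)
  define \<beta> :: real where "\<beta> = (2 ^ (DIM('a) + 1)) powr (1/q - 1/p)"
  have mean: "measure mu S powr (1/p) * \<bar>mean mu S f\<bar> \<le> \<beta> * M" if "doubling mu S" for S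
    using doubling_mean_le_normM[OF that q f] real by (simp add: \<beta>_def ennreal_le_iff flip: ennreal_mult)
  have osc: "(SUP Q\<in>Qcubes mu. ennreal (measure mu (dil 2 Q) powr (1/p - 1/q)) *
      enn_powr (\<integral>\<^sup>+ x\<in>Q. ennreal (\<bar>f x - mean mu (star mu Q) f\<bar> powr q) \<partial>mu) (1/q)) \<le> 2 * (ennreal M + ennreal (\<beta> * M))"
  proof (rule SUP_least)
    fix Q assume Q: "Q \<in> Qcubes mu"
    let ?w = "measure mu (dil 2 Q) powr (1/p - 1/q)" and ?m = "mean mu (star mu Q) f"
    have "ennreal ?w * enn_powr (\<integral>\<^sup>+x\<in>Q. ennreal (\<bar>f x - ?m\<bar> powr q) \<partial>mu) (1/q)
      \<le> 2 * (ennreal ?w * enn_powr (\<integral>\<^sup>+x\<in>Q. ennreal (\<bar>f x\<bar> powr q) \<partial>mu) (1/q)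
        + ennreal (measure mu (star mu Q) powr (1/p) * \<bar>- ?m\<bar>))"
      using Morrey_summand_add_const_le[OF Q doubling_Qcubes[OF star_doubling(1)[OF Q]]
          star_doubling(2)[OF Q] q f, of "- ?m"] by simp
    also have "\<dots> \<le> 2 * (ennreal M + ennreal (\<beta> * M))"
      using normM_summand_le[OF Q, of p q f] real mean[OF star_doubling(1)[OF Q]]
      by (intro mult_left_mono add_mono ennreal_leI) auto
    finally show "ennreal ?w * enn_powr (\<integral>\<^sup>+x\<in>Q. ennreal (\<bar>f x - ?m\<bar> powr q) \<partial>mu) (1/q)
      \<le> 2 * (ennreal M + ennreal (\<beta> * M))" .
  qed
  have means: "(SUP (Q, R)\<in>{(Q, R). Q \<in> Qdoubling mu \<and> R \<in> Qdoubling mu \<and> Q \<subseteq> R}.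
      ennreal (measure mu Q powr (1/p) * \<bar>mean mu Q f - mean mu R f\<bar>) / Kcoef mu n Q R) \<le> ennreal (2 * \<beta> * M)"
  proof (rule SUP_least, clarify)
    fix Q R assume QR: "Q \<in> Qdoubling mu" "R \<in> Qdoubling mu" "Q \<subseteq> R"
    then have "measure mu Q powr (1/p) * \<bar>mean mu Q f - mean mu R f\<bar> \<le> 2 * (\<beta> * M)"
      using q by (intro doubling_mean_diff_le[OF _ _ _ _ mean]) (auto simp: Qdoubling_def)
    then show "ennreal (measure mu Q powr (1/p) * \<bar>mean mu Q f - mean mu R f\<bar>) / Kcoef mu n Q R \<le> ennreal (2 * \<beta> * M)"
      by (intro order.trans[OF ennreal_divide_le_self ennreal_leI]) (auto simp: Kcoef_def)
  qed
  have "normC mu n p q f \<le> 2 * (ennreal M + ennreal (\<beta> * M)) + ennreal (2 * \<beta> * M)"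
    unfolding normC_def using osc means by (rule add_mono)
  also have "\<dots> = ennreal 2 * ennreal (M + \<beta> * M) + ennreal (2 * \<beta> * M)"
    using real by (simp add: \<beta>_def)
  also have "\<dots> = ennreal (2 + 4 * \<beta>) * normM mu p q f"
    using real by (simp add: \<beta>_def algebra_simps del: ennreal_numeral flip: ennreal_mult ennreal_plus)
  finally show ?thesis
    by (simp add: \<beta>_def)
qed (simp add: ennreal_mult_top)

end

theorem theorem2:
  fixes mu :: "'a::euclidean_space measure" and C0 n p q :: real
  assumes "radon_measure mu"
    and "C0 > 0" and "0 < n" and "n \<le> real DIM('a)"
    and "growth mu C0 n"
    and "1 \<le> q" and "q \<le> p"
  shows "\<exists>C>0. \<forall>f. in_C mu n p q f \<and> mean_lim_zero mu f \<longrightarrow>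
            ennreal (1 / C) * normC mu n p q f \<le> normM mu p q f \<and>
            normM mu p q f \<le> ennreal C * normC mu n p q f"
proof -
  interpret growth_measure mu C0 n
    using assms(1-5) by unfold_locales
  define C where "C = max (2 + 2 * Kconst / (1 - 2 powr (- (1/p)))) (2 + 4 * (2 ^ (DIM('a) + 1)) powr (1/q - 1/p))"
  have C: "0 < C"
    by (simp add: C_def less_max_iff_disj add_pos_nonneg)
  have "ennreal (1 / C) * normC mu n p q f \<le> normM mu p q f \<and> normM mu p q f \<le> ennreal C * normC mu n p q f"
    if f: "in_C mu n p q f" "mean_lim_zero mu f" for f
  proof
    have fm: "f \<in> borel_measurable mu"
      using f by (simp add: in_C_def L1_loc_def)
    have "normC mu n p q f \<le> ennreal C * normM mu p q f"
      using normC_le_normM[OF assms(6,7) fm] by (rule order_trans) (intro mult_right_mono ennreal_leI; simp add: C_def)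
    then show "ennreal (1 / C) * normC mu n p q f \<le> normM mu p q f"
      using C by (intro ennreal_inverse_mult_le)
    have "normC mu n p q f < \<infinity>"
      using f(1) by (simp add: in_C_def)
    from normM_le_normC[OF assms(6,7) fm this f(2)]
    show "normM mu p q f \<le> ennreal C * normC mu n p q f"
      by (rule order_trans) (intro mult_right_mono ennreal_leI; simp add: C_def)
  qed
  then show ?thesis
    using C by blast
qed

end
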